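(* Assume $X$ is a semimartingale. Define the predictable set $$\Gamma_0:=\{(\omega,t,x): X_{t-}(\omega)<b(t),\ x=b(t)-X_{t-}(\omega)\}.$$ If $\mathbf 1_{\Gamma_0}*\nu^X\equiv 0$, then $\mathbb P(J_0)=0$. In particular this holds whenever $\nu^X$ admits a predictable disintegration $\nu^X(\omega,dt,dx)=K(\omega,t,dx)\,dA_t(\omega)$, with $A$ a predictable increasing process and $K(\omega,t,\cdot)$ a diffuse (atomless) measure for $\mathbb P\otimes dA$-almost every $(\omega,t)$.
   Context: Let $(\Omega,\mathcal F,\mathbb F=(\mathcal F_t)_{t\ge0},\mathbb P)$ be a filtered probability space satisfying the usual conditions. Let $X$ be a real-valued $\mathbb F$-semimartingale (càdlàg) and $b:[0,\infty)\to\mathbb R$ a continuous deterministic function, with $X_0<b(0)$ identically. $X_{t-}$ denotes the left limit. Let $\mu^X(dt,dx):=\sum_{s>0:\Delta X_s\ne0}\delta_{(s,\Delta X_s)}(dt,dx)$ be the jump measure of $X$ and $\nu^X$ its predictable compensator. For a function $W\ge0$ on $\Omega\times[0,\infty)\times\mathbb R$, $(W*\mu)_t:=\int_0^t\int_{\mathbb R}W(s,x)\,\mu(ds,dx)$; "$\equiv0$" means identically zero up to evanescence. Set $Y_t:=X_t-b(t)$, $\tau:=\inf\{t\ge0:Y_t\ge0\}$ ($\inf\emptyset=\infty$), and $J_0:=\{\tau<\infty,\,Y_{\tau-}<0,\,Y_\tau=0\}$. *)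

theory Defs
  imports "HOL-Probability.Probability"
begin

text \<open>Time set is [0,oo); processes are indexed by real t, only t \<ge> 0 matters.
  A process is a function X :: real => 'a => real (time first, then omega).\<close>

definition usual_conditions :: "'a measure \<Rightarrow> (real \<Rightarrow> 'a measure) \<Rightarrow> bool" where
  "usual_conditions M F \<longleftrightarrow>
     (\<forall>t. space (F t) = space M \<and> sets (F t) \<subseteq> sets M) \<and>
     (\<forall>s t. s \<le> t \<longrightarrow> sets (F s) \<subseteq> sets (F t)) \<and>
     (\<forall>N \<in> null_sets M. \<forall>A. A \<subseteq> N \<longrightarrow> A \<in> sets M) \<and>
     (null_sets M \<subseteq> sets (F 0)) \<and>
     (\<forall>t\<ge>0. sets (F t) = (\<Inter>s\<in>{t<..}. sets (F s)))"

definition adapted :: "(real \<Rightarrow> 'a measure) \<Rightarrow> (real \<Rightarrow> 'a \<Rightarrow> real) \<Rightarrow> bool" where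
  "adapted F X \<longleftrightarrow> (\<forall>t\<ge>0. X t \<in> borel_measurable (F t))"

definition cadlag :: "'a measure \<Rightarrow> (real \<Rightarrow> 'a \<Rightarrow> real) \<Rightarrow> bool" where
  "cadlag M X \<longleftrightarrow> (\<forall>\<omega>\<in>space M. \<forall>t\<ge>0.
      continuous (at_right t) (\<lambda>s. X s \<omega>) \<and>
      (t > 0 \<longrightarrow> (\<exists>l. ((\<lambda>s. X s \<omega>) \<longlongrightarrow> l) (at_left t))))"

definition left_lim :: "(real \<Rightarrow> real) \<Rightarrow> real \<Rightarrow> real" where
  "left_lim f t = (if t \<le> 0 then f 0 else Lim (at_left t) f)"

definition Xminus :: "(real \<Rightarrow> 'a \<Rightarrow> real) \<Rightarrow> real \<Rightarrow> 'a \<Rightarrow> real" where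
  "Xminus X t \<omega> = left_lim (\<lambda>s. X s \<omega>) t"

definition jump :: "(real \<Rightarrow> 'a \<Rightarrow> real) \<Rightarrow> real \<Rightarrow> 'a \<Rightarrow> real" where
  "jump X t \<omega> = X t \<omega> - Xminus X t \<omega>"

definition martingale :: "'a measure \<Rightarrow> (real \<Rightarrow> 'a measure) \<Rightarrow> (real \<Rightarrow> 'a \<Rightarrow> real) \<Rightarrow> bool" where
  "martingale M F X \<longleftrightarrow> adapted F X \<and> (\<forall>t\<ge>0. integrable M (X t)) \<and>
     (\<forall>s t. 0 \<le> s \<and> s \<le> t \<longrightarrow> (AE \<omega> in M. real_cond_exp M (F s) (X t) \<omega> = X s \<omega>))"

definition local_martingale :: "'a measure \<Rightarrow> (real \<Rightarrow> 'a measure) \<Rightarrow> (real \<Rightarrow> 'a \<Rightarrow> real) \<Rightarrow> bool" where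
  "local_martingale M F L \<longleftrightarrow> adapted F L \<and> cadlag M L \<and>
     (\<exists>T :: nat \<Rightarrow> 'a \<Rightarrow> real.
        (\<forall>n. stopping_time F (T n) \<and> (\<forall>\<omega>\<in>space M. 0 \<le> T n \<omega>)) \<and>
        (AE \<omega> in M. mono (\<lambda>n. T n \<omega>) \<and> filterlim (\<lambda>n. T n \<omega>) at_top sequentially) \<and>
        (\<forall>n. martingale M F (\<lambda>t \<omega>. L (min t (T n \<omega>)) \<omega>)))"

definition bounded_variation_on :: "(real \<Rightarrow> real) \<Rightarrow> real \<Rightarrow> real \<Rightarrow> bool" where
  "bounded_variation_on f a b \<longleftrightarrow> (\<exists>B. \<forall>ts. sorted ts \<and> set ts \<subseteq> {a..b} \<longrightarrow>
      (\<Sum>i<length ts - 1. \<bar>f (ts ! Suc i) - f (ts ! i)\<bar>) \<le> B)"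

definition fv_process :: "'a measure \<Rightarrow> (real \<Rightarrow> 'a measure) \<Rightarrow> (real \<Rightarrow> 'a \<Rightarrow> real) \<Rightarrow> bool" where
  "fv_process M F A \<longleftrightarrow> adapted F A \<and> cadlag M A \<and>
     (\<forall>\<omega>\<in>space M. \<forall>t\<ge>0. bounded_variation_on (\<lambda>s. A s \<omega>) 0 t)"

definition semimartingale :: "'a measure \<Rightarrow> (real \<Rightarrow> 'a measure) \<Rightarrow> (real \<Rightarrow> 'a \<Rightarrow> real) \<Rightarrow> bool" where
  "semimartingale M F X \<longleftrightarrow> adapted F X \<and> cadlag M X \<and>
     (\<exists>L A. local_martingale M F L \<and> fv_process M F A \<and>
        (\<forall>\<omega>\<in>space M. L 0 \<omega> = 0 \<and> A 0 \<omega> = 0) \<and>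
        (\<forall>t\<ge>0. \<forall>\<omega>\<in>space M. X t \<omega> = X 0 \<omega> + L t \<omega> + A t \<omega>))"

definition pred_sigma :: "'a measure \<Rightarrow> (real \<Rightarrow> 'a measure) \<Rightarrow> ('a \<times> real) measure" where
  "pred_sigma M F = sigma (space M \<times> {0..})
     ({A \<times> {0} | A. A \<in> sets (F 0)} \<union>
      {A \<times> {s<..t} | A s t. 0 \<le> s \<and> s \<le> t \<and> A \<in> sets (F s)})"

definition predictable_process :: "'a measure \<Rightarrow> (real \<Rightarrow> 'a measure) \<Rightarrow> (real \<Rightarrow> 'a \<Rightarrow> 'b::topological_space) \<Rightarrow> bool" where
  "predictable_process M F Z \<longleftrightarrow> (\<lambda>(\<omega>, t). Z t \<omega>) \<in> borel_measurable (pred_sigma M F)"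

definition Ptilde_measurable :: "'a measure \<Rightarrow> (real \<Rightarrow> 'a measure) \<Rightarrow> ('a \<Rightarrow> real \<Rightarrow> real \<Rightarrow> ennreal) \<Rightarrow> bool" where
  "Ptilde_measurable M F W \<longleftrightarrow>
     (\<lambda>((\<omega>, t), x). W \<omega> t x) \<in> borel_measurable (pred_sigma M F \<Otimes>\<^sub>M (borel :: real measure))"

text \<open>(W * mu^X) over the time set I: sum over jump times s > 0 in I.\<close>
definition int_mu :: "(real \<Rightarrow> 'a \<Rightarrow> real) \<Rightarrow> ('a \<Rightarrow> real \<Rightarrow> real \<Rightarrow> ennreal) \<Rightarrow> real set \<Rightarrow> 'a \<Rightarrow> ennreal" where
  "int_mu X W I \<omega> = (\<integral>\<^sup>+ s. indicator {s \<in> I. 0 < s \<and> jump X s \<omega> \<noteq> 0} s * W \<omega> s (jump X s \<omega>)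
                        \<partial>count_space UNIV)"

definition int_nu :: "('a \<Rightarrow> (real \<times> real) measure) \<Rightarrow> ('a \<Rightarrow> real \<Rightarrow> real \<Rightarrow> ennreal) \<Rightarrow> real set \<Rightarrow> 'a \<Rightarrow> ennreal" where
  "int_nu \<nu> W I \<omega> = (\<integral>\<^sup>+ z. indicator (I \<times> UNIV) z * W \<omega> (fst z) (snd z) \<partial>\<nu> \<omega>)"

text \<open>nu is the predictable compensator of the jump measure mu^X (Jacod--Shiryaev II.1.8).\<close>
definition is_compensator :: "'a measure \<Rightarrow> (real \<Rightarrow> 'a measure) \<Rightarrow> (real \<Rightarrow> 'a \<Rightarrow> real) \<Rightarrow> ('a \<Rightarrow> (real \<times> real) measure) \<Rightarrow> bool" where
  "is_compensator M F X \<nu> \<longleftrightarrow>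
     (\<forall>\<omega>\<in>space M. sets (\<nu> \<omega>) = sets (borel :: (real \<times> real) measure) \<and>
                   emeasure (\<nu> \<omega>) ({..0} \<times> UNIV) = 0) \<and>
     (\<forall>W. Ptilde_measurable M F W \<longrightarrow>
        predictable_process M F (\<lambda>t \<omega>. int_nu \<nu> W {0..t} \<omega>) \<and>
        (\<integral>\<^sup>+ \<omega>. int_mu X W {0..} \<omega> \<partial>M) = (\<integral>\<^sup>+ \<omega>. int_nu \<nu> W {0..} \<omega> \<partial>M))"

definition Gamma0 :: "(real \<Rightarrow> 'a \<Rightarrow> real) \<Rightarrow> (real \<Rightarrow> real) \<Rightarrow> ('a \<times> real \<times> real) set" where
  "Gamma0 X b = {(\<omega>, t, x). Xminus X t \<omega> < b t \<and> x = b t - Xminus X t \<omega>}"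

definition hit_set :: "(real \<Rightarrow> 'a \<Rightarrow> real) \<Rightarrow> (real \<Rightarrow> real) \<Rightarrow> 'a \<Rightarrow> real set" where
  "hit_set X b \<omega> = {t. 0 \<le> t \<and> X t \<omega> - b t \<ge> 0}"

definition tau :: "(real \<Rightarrow> 'a \<Rightarrow> real) \<Rightarrow> (real \<Rightarrow> real) \<Rightarrow> 'a \<Rightarrow> ereal" where
  "tau X b \<omega> = (if hit_set X b \<omega> = {} then \<infinity> else ereal (Inf (hit_set X b \<omega>)))"

definition J0 :: "'a measure \<Rightarrow> (real \<Rightarrow> 'a \<Rightarrow> real) \<Rightarrow> (real \<Rightarrow> real) \<Rightarrow> 'a set" where
  "J0 M X b = {\<omega> \<in> space M. tau X b \<omega> < \<infinity> \<and>
      (let T = real_of_ereal (tau X b \<omega>) in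
         left_lim (\<lambda>t. X t \<omega> - b t) T < 0 \<and> X T \<omega> - b T = 0)}"

definition dA :: "(real \<Rightarrow> 'a \<Rightarrow> real) \<Rightarrow> 'a \<Rightarrow> real measure" where
  "dA A \<omega> = interval_measure (\<lambda>t. A (max t 0) \<omega>)"

definition predictable_disintegration :: "'a measure \<Rightarrow> (real \<Rightarrow> 'a measure) \<Rightarrow> ('a \<Rightarrow> (real \<times> real) measure)
     \<Rightarrow> (real \<Rightarrow> 'a \<Rightarrow> real) \<Rightarrow> ('a \<Rightarrow> real \<Rightarrow> real measure) \<Rightarrow> bool" where
  "predictable_disintegration M F \<nu> A K \<longleftrightarrow>
     \<comment> \<open>A predictable increasing (cadlag, nondecreasing, A_0 = 0) process\<close>
     predictable_process M F A \<and> cadlag M A \<and>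
     (\<forall>\<omega>\<in>space M. mono_on {0..} (\<lambda>t. A t \<omega>) \<and> A 0 \<omega> = 0) \<and>
     \<comment> \<open>K a predictable kernel from (Omega x [0,oo), P) to (R, Borel)\<close>
     (\<forall>\<omega>\<in>space M. \<forall>t\<ge>0. sets (K \<omega> t) = sets (borel :: real measure)) \<and>
     (\<forall>B\<in>sets (borel :: real measure). (\<lambda>(\<omega>, t). emeasure (K \<omega> t) B) \<in> borel_measurable (pred_sigma M F)) \<and>
     \<comment> \<open>the disintegration\<close>
     (\<forall>\<omega>\<in>space M. \<forall>C\<in>sets (borel :: (real \<times> real) measure).
        emeasure (\<nu> \<omega>) C = (\<integral>\<^sup>+ t. indicator {0..} t * emeasure (K \<omega> t) (Pair t -` C) \<partial>dA A \<omega>)) \<and>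
     \<comment> \<open>K(omega,t,.) is diffuse for P (x) dA - a.e. (omega,t)\<close>
     (\<integral>\<^sup>+ \<omega>. (\<integral>\<^sup>+ t. indicator {t. 0 \<le> t \<and> \<not> (\<forall>x. emeasure (K \<omega> t) {x} = 0)} t \<partial>dA A \<omega>) \<partial>M) = 0"

end

theory Submission
  imports Defs
begin

text \<open>
  On \<open>J0\<close> the path of \<open>X\<close> reaches \<open>b\<close> by a jump at a time \<open>s > 0\<close> whose size is exactly
  \<open>b(s) - X(s-)\<close>, so the jump measure charges \<open>Gamma0\<close> there and
  \<open>P(J0) \<le> E[1_Gamma0 * mu^X] = E[1_Gamma0 * nu^X]\<close>. The event \<open>J0\<close> need not be measurable,
  but it lies inside the event that \<open>X\<close> jumps onto \<open>b\<close> at some positive time, which has a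
  countable description on dyadic grids; completeness does the rest.

  Under a disintegration \<open>nu(dt, dx) = K(t, dx) dA_t\<close>, \<open>1_Gamma0 * nu^X\<close> is the \<open>dA\<close>-integral
  of the atom of \<open>K(t)\<close> at \<open>b(t) - X(t-)\<close>. Where some dyadic cell around this point has finite
  \<open>K\<close>-mass, the masses of the shrinking cells converge to the atom, which vanishes
  \<open>P \<otimes> dA\<close>-a.e. by diffuseness. The predictable set where all these masses are infinite is
  \<open>dA\<close>-null too: on the part of it where \<open>X\<close> has at most \<open>m\<close> big jumps, the indicator of
  the cells has infinite \<open>nu\<close>-integral but \<open>mu^X\<close>-integral at most \<open>m + 1\<close>, and the two
  expectations agree.
\<close>

section \<open>Dyadic grids\<close>

definition dyadic_index :: "nat \<Rightarrow> real \<Rightarrow> nat" where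
  "dyadic_index n t = nat (\<lceil>2 ^ n * t\<rceil> - 1)"

lemma dyadic_index_bounds:
  assumes "0 < t"
  shows "real (dyadic_index n t) / 2 ^ n < t" "t \<le> (real (dyadic_index n t) + 1) / 2 ^ n"
proof -
  have "0 < \<lceil>2 ^ n * t\<rceil>" using assms by simp
  then have k: "real (dyadic_index n t) = real_of_int \<lceil>2 ^ n * t\<rceil> - 1"
    by (simp add: dyadic_index_def)
  have "real (dyadic_index n t) < 2 ^ n * t" "2 ^ n * t \<le> real (dyadic_index n t) + 1"
    unfolding k by linarith+
  then show "real (dyadic_index n t) / 2 ^ n < t" "t \<le> (real (dyadic_index n t) + 1) / 2 ^ n"
    by (simp_all add: pos_divide_less_eq pos_le_divide_eq mult.commute)
qed

lemma dyadic_index_unique: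
  assumes "real k / 2 ^ n < t" "t \<le> (real k + 1) / 2 ^ n"
  shows "dyadic_index n t = k"
proof -
  have "real k < 2 ^ n * t" "2 ^ n * t \<le> real k + 1"
    using assms by (simp_all add: divide_less_eq le_divide_eq mult.commute)
  then have "\<lceil>2 ^ n * t\<rceil> = int k + 1" by (simp add: ceiling_eq_iff)
  then show ?thesis by (simp add: dyadic_index_def)
qed

lemma dyadic_index_close:
  assumes "0 < t"
  shows "t - 1 / 2 ^ n \<le> real (dyadic_index n t) / 2 ^ n"
    "(real (dyadic_index n t) + 1) / 2 ^ n < t + 1 / 2 ^ n"
  using dyadic_index_bounds[OF assms, of n] by (simp_all add: add_divide_distrib)

lemma dyadic_index_tendsto:
  assumes t: "0 < t"
  shows "(\<lambda>n. real (dyadic_index n t) / 2 ^ n) \<longlonglongrightarrow> t"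
    and "(\<lambda>n. (real (dyadic_index n t) + 1) / 2 ^ n) \<longlonglongrightarrow> t"
proof -
  note bounds = dyadic_index_bounds[OF t] dyadic_index_close[OF t]
  have "(\<lambda>n. t - 1 / 2 ^ n) \<longlonglongrightarrow> t"
    using tendsto_diff[OF tendsto_const LIMSEQ_divide_realpow_zero[of 2 1]] by simp
  then show "(\<lambda>n. real (dyadic_index n t) / 2 ^ n) \<longlonglongrightarrow> t"
    by (rule tendsto_sandwich[OF _ _ _ tendsto_const, rotated 2])
      (use bounds in \<open>auto intro!: always_eventually less_imp_le\<close>)
  have "(\<lambda>n. t + 1 / 2 ^ n) \<longlonglongrightarrow> t"
    using tendsto_add[OF tendsto_const LIMSEQ_divide_realpow_zero[of 2 1]] by simp
  then show "(\<lambda>n. (real (dyadic_index n t) + 1) / 2 ^ n) \<longlonglongrightarrow> t"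
    by (rule tendsto_sandwich[OF _ _ tendsto_const, rotated 2])
      (use bounds in \<open>auto intro!: always_eventually less_imp_le\<close>)
qed

lemma eventually_inverse_two_power_less:
  assumes "0 < d"
  shows "\<forall>\<^sub>F n in sequentially. 1 / 2 ^ n < (d :: real)"
  using tendstoD[OF LIMSEQ_divide_realpow_zero[of 2 1] assms] by (simp add: dist_real_def)

lemma dyadic_index_tendsto_at_left:
  assumes t: "0 < t"
  shows "filterlim (\<lambda>n. real (dyadic_index n t) / 2 ^ n) (at_left t) sequentially"
  using dyadic_index_tendsto(1)[OF t] dyadic_index_bounds(1)[OF t]
  by (auto simp: filterlim_at less_imp_neq intro!: always_eventually)

definition dyadic_cell :: "nat \<Rightarrow> real \<Rightarrow> real set" where
  "dyadic_cell n x = {real_of_int \<lfloor>2 ^ n * x\<rfloor> / 2 ^ n ..< (real_of_int \<lfloor>2 ^ n * x\<rfloor> + 1) / 2 ^ n}"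

lemma mem_dyadic_cell_iff: "y \<in> dyadic_cell n x \<longleftrightarrow> \<lfloor>2 ^ n * y\<rfloor> = \<lfloor>2 ^ n * x\<rfloor>"
proof -
  have "y \<in> dyadic_cell n x \<longleftrightarrow>
      real_of_int \<lfloor>2 ^ n * x\<rfloor> \<le> 2 ^ n * y \<and> 2 ^ n * y < real_of_int \<lfloor>2 ^ n * x\<rfloor> + 1"
    unfolding dyadic_cell_def by (auto simp: divide_le_eq pos_less_divide_eq mult.commute)
  also have "\<dots> \<longleftrightarrow> \<lfloor>2 ^ n * y\<rfloor> = \<lfloor>2 ^ n * x\<rfloor>" by (simp add: floor_eq_iff)
  finally show ?thesis .
qed

lemma dyadic_cell_in_sets[measurable]: "dyadic_cell n x \<in> sets borel"
  by (simp add: dyadic_cell_def)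

lemma dyadic_cell_close:
  assumes "y \<in> dyadic_cell n x"
  shows "\<bar>y - x\<bar> < 1 / 2 ^ n"
proof -
  have "\<bar>2 ^ n * y - 2 ^ n * x\<bar> < 1"
    using assms unfolding mem_dyadic_cell_iff by linarith
  also have "\<bar>2 ^ n * y - 2 ^ n * x\<bar> = 2 ^ n * \<bar>y - x\<bar>"
    by (simp add: abs_mult right_diff_distrib[symmetric])
  finally show ?thesis by (simp add: pos_less_divide_eq mult.commute)
qed

lemma dyadic_cell_Suc_subset: "dyadic_cell (Suc n) x \<subseteq> dyadic_cell n x"
proof
  have floor_Suc: "\<lfloor>2 ^ n * z\<rfloor> = \<lfloor>2 ^ Suc n * z\<rfloor> div 2" for z :: real
    using floor_divide_real_eq_div[of 2 "2 ^ Suc n * z"] by simp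
  fix y assume "y \<in> dyadic_cell (Suc n) x"
  then show "y \<in> dyadic_cell n x" unfolding mem_dyadic_cell_iff floor_Suc[of y] floor_Suc[of x] by simp
qed

lemma Inter_dyadic_cell: "(\<Inter>n. dyadic_cell n x) = {x}"
proof (intro equalityI subsetI)
  fix y assume y: "y \<in> (\<Inter>n. dyadic_cell n x)"
  show "y \<in> {x}"
  proof (rule ccontr)
    assume "y \<notin> {x}"
    then obtain n where "1 / 2 ^ n < \<bar>y - x\<bar>"
      using eventually_happens'[OF sequentially_bot eventually_inverse_two_power_less[of "\<bar>y - x\<bar>"]] by auto
    with dyadic_cell_close[of y n x] y show False by auto
  qed
qed (auto simp: mem_dyadic_cell_iff)

lemma INF_emeasure_dyadic_cell:
  assumes "sets N = sets borel" "\<exists>n. emeasure N (dyadic_cell n x) \<noteq> \<infinity>"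
  shows "(INF n. emeasure N (dyadic_cell n x)) = emeasure N {x}"
  using assms INF_emeasure_decseq'[of "\<lambda>n. dyadic_cell n x" N]
  by (simp add: Inter_dyadic_cell decseq_Suc_iff dyadic_cell_Suc_subset)

section \<open>The predictable \<sigma>-algebra\<close>

locale filtration =
  fixes M :: "'a measure" and F :: "real \<Rightarrow> 'a measure"
  assumes subalgebra_F: "subalgebra M (F t)"
    and sets_F_mono: "s \<le> t \<Longrightarrow> sets (F s) \<subseteq> sets (F t)"

lemma usual_conditions_filtration: "usual_conditions M F \<Longrightarrow> filtration M F"
  unfolding usual_conditions_def filtration_def subalgebra_def by auto

definition pred_generators :: "'a measure \<Rightarrow> (real \<Rightarrow> 'a measure) \<Rightarrow> ('a \<times> real) set set" where
  "pred_generators M F = {A \<times> {0} | A. A \<in> sets (F 0)} \<union>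
      {A \<times> {s<..t} | A s t. 0 \<le> s \<and> s \<le> t \<and> A \<in> sets (F s)}"

lemma pred_sigma_eq: "pred_sigma M F = sigma (space M \<times> {0..}) (pred_generators M F)"
  unfolding pred_sigma_def pred_generators_def ..

lemma space_pred_sigma: "space (pred_sigma M F) = space M \<times> {0..}"
  unfolding pred_sigma_def by (rule space_measure_of_conv)

definition dyadic_left_sample :: "nat \<Rightarrow> (real \<Rightarrow> 'a \<Rightarrow> real) \<Rightarrow> 'a \<Rightarrow> real \<Rightarrow> real" where
  "dyadic_left_sample n Z \<omega> t = (if t \<le> 0 then Z 0 \<omega> else Z (real (dyadic_index n t) / 2 ^ n) \<omega>)"

context filtration
begin

lemma sets_F_subset: "A \<in> sets (F t) \<Longrightarrow> A \<in> sets M"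
  using subalgebra_F by (auto simp: subalgebra_def)

lemma space_F: "space (F t) = space M"
  using subalgebra_F by (simp add: subalgebra_def)

lemma pred_generators_subset: "pred_generators M F \<subseteq> Pow (space M \<times> {0..})"
  unfolding pred_generators_def by (force dest: sets_F_subset sets.sets_into_space)

lemma pred_generators_in_sets: "G \<in> pred_generators M F \<Longrightarrow> G \<in> sets (pred_sigma M F)"
  using sets_measure_of[OF pred_generators_subset] by (auto simp: pred_sigma_eq)

lemma pred_sigma_Times_0: "A \<in> sets (F 0) \<Longrightarrow> A \<times> {0} \<in> sets (pred_sigma M F)"
  by (rule pred_generators_in_sets) (auto simp: pred_generators_def)

lemma pred_sigma_Times_Ioc:
  "A \<in> sets (F s) \<Longrightarrow> 0 \<le> s \<Longrightarrow> s \<le> t \<Longrightarrow> A \<times> {s<..t} \<in> sets (pred_sigma M F)"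
  by (rule pred_generators_in_sets) (auto simp: pred_generators_def)

lemma pred_sigma_Times_Ioi:
  assumes "A \<in> sets (F s)" "0 \<le> s"
  shows "A \<times> {s<..} \<in> sets (pred_sigma M F)"
proof -
  have "{s<..} = (\<Union>m::nat. {s<..s + real m})"
    by auto (metis add.commute diff_le_eq real_arch_simple)
  then have "A \<times> {s<..} = (\<Union>m::nat. A \<times> {s<..s + real m})"
    by blast
  moreover have "A \<times> {s<..s + real m} \<in> sets (pred_sigma M F)" for m
    using pred_sigma_Times_Ioc[OF assms] by simp
  ultimately show ?thesis by auto
qed

lemma measurable_Pair_time:
  assumes "0 \<le> t"
  shows "(\<lambda>\<omega>. (\<omega>, t)) \<in> M \<rightarrow>\<^sub>M pred_sigma M F"
  unfolding pred_sigma_eq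
proof (rule measurable_measure_of[OF pred_generators_subset])
  fix G assume "G \<in> pred_generators M F"
  then show "(\<lambda>\<omega>. (\<omega>, t)) -` G \<inter> space M \<in> sets M"
    unfolding pred_generators_def by (auto dest: sets_F_subset)
qed (use assms in auto)

lemma measurable_Pair_path:
  assumes "\<omega> \<in> space M"
  shows "Pair \<omega> \<in> restrict_space borel {0..} \<rightarrow>\<^sub>M pred_sigma M F"
  unfolding pred_sigma_eq
proof (rule measurable_measure_of[OF pred_generators_subset])
  fix G assume "G \<in> pred_generators M F"
  then show "Pair \<omega> -` G \<inter> space (restrict_space borel {0..}) \<in> sets (restrict_space borel {0..})"
    unfolding pred_generators_def by (auto simp: sets_restrict_space_iff vimage_def Int_def)
qed (use assms in \<open>auto simp: space_restrict_space\<close>)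

lemma borel_measurable_pred_sigma_time:
  "f \<in> borel_measurable (pred_sigma M F) \<Longrightarrow> 0 \<le> t \<Longrightarrow> (\<lambda>\<omega>. f (\<omega>, t)) \<in> borel_measurable M"
  using measurable_comp[OF measurable_Pair_time] by (simp add: o_def)

lemma sets_pred_sigma_path:
  assumes S: "S \<in> sets (pred_sigma M F)" and \<omega>: "\<omega> \<in> space M"
  shows "{t. (\<omega>, t) \<in> S} \<in> sets borel"
proof -
  have "Pair \<omega> -` S \<inter> {0..} \<in> sets (restrict_space borel {0..})"
    using measurable_sets[OF measurable_Pair_path[OF \<omega>] S] by (simp add: space_restrict_space)
  moreover have "Pair \<omega> -` S \<inter> {0..} = {t. (\<omega>, t) \<in> S}"
    using sets.sets_into_space[OF S] by (auto simp: space_pred_sigma)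
  ultimately show ?thesis by (auto simp: sets_restrict_space_iff)
qed

lemma adapted_sets:
  "adapted F Z \<Longrightarrow> 0 \<le> s \<Longrightarrow> B \<in> sets borel \<Longrightarrow> {\<omega> \<in> space M. Z s \<omega> \<in> B} \<in> sets (F s)"
  using measurable_sets[of "Z s" "F s" borel B] by (auto simp: adapted_def space_F vimage_def Int_def conj_commute)

lemma dyadic_left_sample_measurable:
  assumes Z: "adapted F Z"
  shows "(\<lambda>(\<omega>, t). dyadic_left_sample n Z \<omega> t) \<in> borel_measurable (pred_sigma M F)"
proof (rule measurableI)
  fix B :: "real set" assume B: "B \<in> sets borel"
  define I where "I k = {real k / 2 ^ n<..(real k + 1) / 2 ^ n}" for k :: nat
  define P where "P = {\<omega> \<in> space M. Z 0 \<omega> \<in> B} \<times> {0} \<union>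
     (\<Union>k. {\<omega> \<in> space M. Z (real k / 2 ^ n) \<omega> \<in> B} \<times> I k)"
  have "{\<omega> \<in> space M. Z (real k / 2 ^ n) \<omega> \<in> B} \<times> I k \<in> sets (pred_sigma M F)" for k
    unfolding I_def by (rule pred_sigma_Times_Ioc[OF adapted_sets[OF Z _ B]]) (auto simp: divide_right_mono)
  then have "P \<in> sets (pred_sigma M F)"
    unfolding P_def by (intro sets.Un sets.countable_UN' pred_sigma_Times_0 adapted_sets[OF Z _ B]) auto
  moreover have "(\<lambda>(\<omega>, t). dyadic_left_sample n Z \<omega> t) -` B \<inter> space (pred_sigma M F) = P"
  proof (intro set_eqI iffI)
    fix z assume z: "z \<in> (\<lambda>(\<omega>, t). dyadic_left_sample n Z \<omega> t) -` B \<inter> space (pred_sigma M F)"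
    obtain \<omega> t where [simp]: "z = (\<omega>, t)" by force
    have "0 < t \<Longrightarrow> t \<in> I (dyadic_index n t)"
      using dyadic_index_bounds by (simp add: I_def)
    then show "z \<in> P"
      using z by (cases "t = 0") (auto simp: P_def dyadic_left_sample_def space_pred_sigma)
  next
    fix z assume z: "z \<in> P"
    obtain \<omega> t where [simp]: "z = (\<omega>, t)" by force
    have Ik: "t \<in> I k \<Longrightarrow> 0 < t \<and> dyadic_index n t = k" for k
      unfolding I_def by (auto intro: dyadic_index_unique le_less_trans[rotated])
    show "z \<in> (\<lambda>(\<omega>, t). dyadic_left_sample n Z \<omega> t) -` B \<inter> space (pred_sigma M F)"
      using z by (auto simp: P_def dyadic_left_sample_def space_pred_sigma less_imp_le dest!: Ik)
  qed
  ultimately show "(\<lambda>(\<omega>, t). dyadic_left_sample n Z \<omega> t) -` B \<inter> space (pred_sigma M F) \<in> sets (pred_sigma M F)"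
    by simp
qed simp

lemma predictable_left_limit:
  assumes Z: "adapted F Z"
    and lim: "\<And>\<omega> t. \<omega> \<in> space M \<Longrightarrow> 0 < t \<Longrightarrow> ((\<lambda>s. Z s \<omega>) \<longlongrightarrow> G t \<omega>) (at_left t)"
    and G0: "\<And>\<omega>. \<omega> \<in> space M \<Longrightarrow> G 0 \<omega> = Z 0 \<omega>"
  shows "predictable_process M F G"
  unfolding predictable_process_def
proof (rule borel_measurable_LIMSEQ_real[OF _ dyadic_left_sample_measurable[OF Z]])
  fix x assume "x \<in> space (pred_sigma M F)"
  then obtain \<omega> t where x: "x = (\<omega>, t)" "\<omega> \<in> space M" "0 \<le> t" by (auto simp: space_pred_sigma)
  show "(\<lambda>n. case x of (\<omega>, t) \<Rightarrow> dyadic_left_sample n Z \<omega> t) \<longlonglongrightarrow> (case x of (\<omega>, t) \<Rightarrow> G t \<omega>)"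
  proof (cases "t = 0")
    case False
    then have "0 < t" using x by simp
    from filterlim_compose[OF lim[OF x(2) this] dyadic_index_tendsto_at_left[OF this]] this
    show ?thesis by (simp add: x dyadic_left_sample_def)
  qed (simp add: x G0 dyadic_left_sample_def)
qed

end

section \<open>Paths of cadlag processes\<close>

lemma continuous_at_right_nbhd:
  fixes f :: "real \<Rightarrow> real"
  assumes "continuous (at_right s) f" "0 < e"
  shows "\<exists>d>0. \<forall>w. s \<le> w \<and> w < s + d \<longrightarrow> \<bar>f w - f s\<bar> < e"
proof -
  have "\<forall>\<^sub>F w in at_right s. \<bar>f w - f s\<bar> < e"
    using tendstoD[OF assms[unfolded continuous_within]] by (simp add: dist_real_def)
  then obtain c where "c > s" "\<forall>w>s. w < c \<longrightarrow> \<bar>f w - f s\<bar> < e"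
    by (auto simp: eventually_at_right[of s "s + 1"])
  then show ?thesis
    using assms(2) by (intro exI[of _ "c - s"]) (auto simp: le_less)
qed

lemma tendsto_at_left_nbhd:
  fixes f :: "real \<Rightarrow> real"
  assumes "(f \<longlongrightarrow> L) (at_left s)" "0 < e"
  shows "\<exists>d>0. \<forall>w. s - d < w \<and> w < s \<longrightarrow> \<bar>f w - L\<bar> < e"
proof -
  have "\<forall>\<^sub>F w in at_left s. \<bar>f w - L\<bar> < e"
    using tendstoD[OF assms] by (simp add: dist_real_def)
  then obtain c where "c < s" "\<forall>w>c. w < s \<longrightarrow> \<bar>f w - L\<bar> < e"
    by (auto simp: eventually_at_left[of "s - 1" s])
  then show ?thesis
    by (intro exI[of _ "s - c"]) auto
qed

lemma cadlag_continuous_at_right: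
  "cadlag M X \<Longrightarrow> \<omega> \<in> space M \<Longrightarrow> 0 \<le> t \<Longrightarrow> continuous (at_right t) (\<lambda>s. X s \<omega>)"
  unfolding cadlag_def by blast

lemma cadlag_tendsto_Xminus:
  assumes "cadlag M X" "\<omega> \<in> space M" "0 < t"
  shows "((\<lambda>s. X s \<omega>) \<longlongrightarrow> Xminus X t \<omega>) (at_left t)"
proof -
  obtain l where l: "((\<lambda>s. X s \<omega>) \<longlongrightarrow> l) (at_left t)"
    using assms unfolding cadlag_def by (meson less_imp_le)
  moreover have "Xminus X t \<omega> = l"
    using assms(3) tendsto_Lim[OF trivial_limit_at_left_real l] by (simp add: Xminus_def left_lim_def)
  ultimately show ?thesis by simp
qed

lemma continuous_on_nonneg_at_right:
  "continuous_on {0..} b \<Longrightarrow> 0 \<le> t \<Longrightarrow> continuous (at_right t) b"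
  unfolding continuous_within continuous_on_def
  by (auto intro: tendsto_within_subset)

lemma continuous_on_nonneg_tendsto_at_left:
  assumes "continuous_on {0..} b" "0 < (t :: real)"
  shows "(b \<longlongrightarrow> b t) (at_left t)"
proof -
  have "(b \<longlongrightarrow> b t) (at t within {0..})"
    using assms by (simp add: continuous_on_def)
  then have "(b \<longlongrightarrow> b t) (at t within {0..t})"
    by (rule tendsto_within_subset) auto
  then show ?thesis using at_within_Icc_at_left[OF assms(2)] by simp
qed

locale cadlag_adapted = filtration M F
  for M :: "'a measure" and F :: "real \<Rightarrow> 'a measure" +
  fixes X :: "real \<Rightarrow> 'a \<Rightarrow> real"
  assumes adapted_X: "adapted F X" and cadlag_X: "cadlag M X"
begin

lemma predictable_Xminus: "predictable_process M F (Xminus X)"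
  by (rule predictable_left_limit[OF adapted_X cadlag_tendsto_Xminus[OF cadlag_X]])
    (simp_all add: Xminus_def left_lim_def)

lemma Xminus_measurable[measurable]:
  "(\<lambda>x. Xminus X (snd x) (fst x)) \<in> borel_measurable (pred_sigma M F)"
  using predictable_Xminus by (simp add: predictable_process_def case_prod_beta')

lemma X_measurable: "0 \<le> t \<Longrightarrow> X t \<in> borel_measurable M"
  using adapted_X measurable_from_subalg[OF subalgebra_F] by (auto simp: adapted_def)

end

locale boundary_crossing = cadlag_adapted M F X
  for M :: "'a measure" and F :: "real \<Rightarrow> 'a measure" and X :: "real \<Rightarrow> 'a \<Rightarrow> real" +
  fixes b :: "real \<Rightarrow> real"
  assumes usual_conditions: "usual_conditions M F"
    and continuous_b: "continuous_on {0..} b"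

context boundary_crossing
begin

lemma path_minus_b_continuous_at_right:
  "\<omega> \<in> space M \<Longrightarrow> 0 \<le> t \<Longrightarrow> continuous (at_right t) (\<lambda>s. X s \<omega> - b s)"
  by (intro continuous_diff cadlag_continuous_at_right[OF cadlag_X]
      continuous_on_nonneg_at_right[OF continuous_b])

lemma path_minus_b_tendsto_at_left:
  "\<omega> \<in> space M \<Longrightarrow> 0 < t \<Longrightarrow> ((\<lambda>s. X s \<omega> - b s) \<longlongrightarrow> Xminus X t \<omega> - b t) (at_left t)"
  by (intro tendsto_diff cadlag_tendsto_Xminus[OF cadlag_X]
      continuous_on_nonneg_tendsto_at_left[OF continuous_b])

lemma path_minus_b_left_nbhd:
  assumes "\<omega> \<in> space M" "0 \<le> s" "0 < e"
  shows "\<exists>d>0. \<forall>w. s - d < w \<and> w < s \<and> 0 \<le> w \<longrightarrow> \<bar>X w \<omega> - b w - (Xminus X s \<omega> - b s)\<bar> < e"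
proof (cases "s = 0")
  case False
  then show ?thesis
    using tendsto_at_left_nbhd[OF path_minus_b_tendsto_at_left[OF assms(1)] assms(3), of s] assms(2) by auto
qed (auto intro: exI[of _ 1])

lemma predictable_b: "predictable_process M F (\<lambda>t \<omega>. b t)"
  by (rule predictable_left_limit[where Z="\<lambda>t \<omega>. b t"])
    (auto simp: adapted_def continuous_on_nonneg_tendsto_at_left[OF continuous_b])

lemma b_measurable[measurable]: "(\<lambda>x. b (snd x)) \<in> borel_measurable (pred_sigma M F)"
  using predictable_b by (simp add: predictable_process_def case_prod_beta')

lemma Ptilde_measurable_Gamma0:
  "Ptilde_measurable M F (\<lambda>\<omega> t x. indicator (Gamma0 X b) (\<omega>, t, x))"
proof -
  have "(\<lambda>((\<omega>, t), x). indicator (Gamma0 X b) (\<omega>, t, x)) =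
    (\<lambda>z. if Xminus X (snd (fst z)) (fst (fst z)) < b (snd (fst z)) \<and>
             snd z = b (snd (fst z)) - Xminus X (snd (fst z)) (fst (fst z)) then 1 else (0::ennreal))"
    by (auto simp: Gamma0_def indicator_def fun_eq_iff)
  then show ?thesis unfolding Ptilde_measurable_def by simp
qed

end

section \<open>Jumps onto the boundary\<close>

definition jumps_onto :: "(real \<Rightarrow> 'a \<Rightarrow> real) \<Rightarrow> (real \<Rightarrow> real) \<Rightarrow> 'a \<Rightarrow> bool" where
  "jumps_onto X b \<omega> \<longleftrightarrow> (\<exists>s>0. Xminus X s \<omega> < b s \<and> X s \<omega> = b s)"

text \<open>A countable, hence measurable, description of \<open>jumps_onto X b\<close>.\<close>
definition dyadic_crossing :: "(real \<Rightarrow> 'a \<Rightarrow> real) \<Rightarrow> (real \<Rightarrow> real) \<Rightarrow> 'a \<Rightarrow> bool" where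
  "dyadic_crossing X b \<omega> \<longleftrightarrow> (\<exists>i N::nat. \<forall>j. \<exists>n\<ge>j. \<exists>k::nat.
     (real k + 1) / 2 ^ n \<le> real N \<and>
     X (real k / 2 ^ n) \<omega> - b (real k / 2 ^ n) \<le> - inverse (real (Suc i)) \<and>
     \<bar>X ((real k + 1) / 2 ^ n) \<omega> - b ((real k + 1) / 2 ^ n)\<bar> \<le> inverse (real (Suc j)))"

lemma one_le_int_mu_Gamma0:
  assumes "jumps_onto X b \<omega>"
  shows "1 \<le> int_mu X (\<lambda>\<omega> t x. indicator (Gamma0 X b) (\<omega>, t, x)) {0..} \<omega>"
proof -
  obtain s where s: "0 < s" "Xminus X s \<omega> < b s" "X s \<omega> = b s"
    using assms by (auto simp: jumps_onto_def)
  have "(1::ennreal) = (\<integral>\<^sup>+ t. indicator {s} t \<partial>count_space UNIV)"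
    by simp
  also have "\<dots> \<le> int_mu X (\<lambda>\<omega> t x. indicator (Gamma0 X b) (\<omega>, t, x)) {0..} \<omega>"
    unfolding int_mu_def using s
    by (intro nn_integral_mono) (auto simp: indicator_def jump_def Gamma0_def)
  finally show ?thesis .
qed

context boundary_crossing
begin

lemma jumps_onto_if_J0:
  assumes X0: "\<forall>\<omega>\<in>space M. X 0 \<omega> < b 0" and J: "\<omega> \<in> J0 M X b"
  shows "jumps_onto X b \<omega>"
proof -
  define H where "H = hit_set X b \<omega>"
  have \<omega>: "\<omega> \<in> space M" and "tau X b \<omega> < \<infinity>" using J by (auto simp: J0_def)
  then have "H \<noteq> {}" by (auto simp: tau_def H_def)
  define T where "T = Inf H"
  have J': "left_lim (\<lambda>t. X t \<omega> - b t) T < 0" "X T \<omega> - b T = 0"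
    using J \<open>H \<noteq> {}\<close> by (auto simp: J0_def Let_def tau_def H_def T_def)
  have "0 \<le> T" unfolding T_def
    by (rule cInf_greatest[OF \<open>H \<noteq> {}\<close>]) (auto simp: H_def hit_set_def)
  moreover have "T \<noteq> 0" using J'(2) X0 \<omega> by auto
  ultimately have T: "0 < T" by simp
  then have "left_lim (\<lambda>t. X t \<omega> - b t) T = Xminus X T \<omega> - b T"
    using tendsto_Lim[OF trivial_limit_at_left_real path_minus_b_tendsto_at_left[OF \<omega> T]]
    by (simp add: left_lim_def)
  then show ?thesis using J' T by (auto simp: jumps_onto_def)
qed

lemma dyadic_crossing_if_jumps_onto:
  assumes \<omega>: "\<omega> \<in> space M" and "jumps_onto X b \<omega>"
  shows "dyadic_crossing X b \<omega>"
proof -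
  obtain s where s: "0 < s" "Xminus X s \<omega> < b s" "X s \<omega> = b s"
    using assms(2) by (auto simp: jumps_onto_def)
  define Y where "Y w = X w \<omega> - b w" for w
  define l where "l n = real (dyadic_index n s) / 2 ^ n" for n
  define r where "r n = (real (dyadic_index n s) + 1) / 2 ^ n" for n
  obtain i where "inverse (real (Suc i)) < b s - Xminus X s \<omega>"
    using reals_Archimedean[of "b s - Xminus X s \<omega>"] s(2) by auto
  then have i: "Xminus X s \<omega> - b s < - inverse (real (Suc i))" by linarith
  obtain N :: nat where N: "s < real N" using reals_Archimedean2 by blast
  have Yl: "(\<lambda>n. Y (l n)) \<longlonglongrightarrow> Xminus X s \<omega> - b s"
    unfolding Y_def l_def
    by (rule filterlim_compose[OF path_minus_b_tendsto_at_left[OF \<omega> s(1)] dyadic_index_tendsto_at_left[OF s(1)]])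
  have r: "r \<longlonglongrightarrow> s" unfolding r_def by (rule dyadic_index_tendsto(2)[OF s(1)])
  have "(\<lambda>n. Y (r n)) \<longlonglongrightarrow> Y s"
    using path_minus_b_continuous_at_right[OF \<omega>, of s] s(1) dyadic_index_bounds(2)[OF s(1)]
    unfolding Y_def r_def at_within_Ici_at_right[symmetric]
    by (intro continuous_within_tendsto_compose'[OF _ _ r[unfolded r_def]]) auto
  then have Yr: "(\<lambda>n. Y (r n)) \<longlonglongrightarrow> 0" using s(3) by (simp add: Y_def)
  show ?thesis unfolding dyadic_crossing_def
  proof (rule exI[of _ i], rule exI[of _ N], rule allI)
    fix j
    have pos: "0 < inverse (real (Suc j))" by simp
    have "\<forall>\<^sub>F n in sequentially. j \<le> n \<and> r n \<le> real N \<and> Y (l n) \<le> - inverse (real (Suc i)) \<and>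
        \<bar>Y (r n)\<bar> \<le> inverse (real (Suc j))"
      using eventually_ge_at_top[of j] order_tendstoD(2)[OF r N] order_tendstoD(2)[OF Yl i]
        tendstoD[OF Yr pos]
      by eventually_elim (auto simp: dist_real_def)
    then obtain n where "j \<le> n" "r n \<le> real N" "Y (l n) \<le> - inverse (real (Suc i))"
        "\<bar>Y (r n)\<bar> \<le> inverse (real (Suc j))"
      using eventually_happens'[OF sequentially_bot] by blast
    then show "\<exists>n\<ge>j. \<exists>k::nat. (real k + 1) / 2 ^ n \<le> real N \<and>
        X (real k / 2 ^ n) \<omega> - b (real k / 2 ^ n) \<le> - inverse (real (Suc i)) \<and>
        \<bar>X ((real k + 1) / 2 ^ n) \<omega> - b ((real k + 1) / 2 ^ n)\<bar> \<le> inverse (real (Suc j))"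
      unfolding Y_def l_def r_def by blast
  qed
qed

lemma shrinking_cells_limit:
  assumes \<omega>: "\<omega> \<in> space M" and u: "u \<longlonglongrightarrow> s" and v: "v \<longlonglongrightarrow> s"
    and uv: "\<And>j. 0 \<le> u j \<and> u j < v j"
    and below: "\<And>j. X (u j) \<omega> - b (u j) \<le> - c"
    and onto: "(\<lambda>j. X (v j) \<omega> - b (v j)) \<longlonglongrightarrow> 0"
    and e: "0 < e" "e < c / 3"
  shows "0 < s \<and> Xminus X s \<omega> - b s < e - c \<and> \<bar>X s \<omega> - b s\<bar> < 2 * e"
proof -
  define Y where "Y w = X w \<omega> - b w" for w
  define L where "L = Xminus X s \<omega> - b s"
  have s0: "0 \<le> s" using uv by (intro LIMSEQ_le_const[OF u]) auto
  obtain d1 where d1: "d1 > 0" "\<And>w. s - d1 < w \<Longrightarrow> w < s \<Longrightarrow> 0 \<le> w \<Longrightarrow> \<bar>Y w - L\<bar> < e"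
    using path_minus_b_left_nbhd[OF \<omega> s0 e(1)] unfolding Y_def L_def by blast
  obtain d2 where d2: "d2 > 0" "\<And>w. s \<le> w \<Longrightarrow> w < s + d2 \<Longrightarrow> \<bar>Y w - Y s\<bar> < e"
    using continuous_at_right_nbhd[OF path_minus_b_continuous_at_right[OF \<omega> s0] e(1)] unfolding Y_def by blast
  have "\<forall>\<^sub>F j in sequentially. dist (u j) s < min d1 d2 \<and> dist (v j) s < min d1 d2 \<and> dist (Y (v j)) 0 < e"
    using tendstoD[OF u] tendstoD[OF v] tendstoD[OF onto e(1)] d1(1) d2(1)
    unfolding Y_def by (simp add: eventually_conj)
  then obtain j where j: "\<bar>u j - s\<bar> < min d1 d2" "\<bar>v j - s\<bar> < min d1 d2" "\<bar>Y (v j)\<bar> < e"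
    using eventually_happens'[OF sequentially_bot] by (auto simp: dist_real_def)
  have Yu: "Y (u j) \<le> - c" using below by (simp add: Y_def)
  have u0: "0 \<le> u j" and uvj: "u j < v j" using uv[of j] by auto
  consider "s \<le> u j" | "v j < s" | "u j < s" "s \<le> v j" by linarith
  then have "0 < s \<and> L < e - c \<and> \<bar>Y s\<bar> < 2 * e"
  proof cases
    case 1
    have "\<bar>Y (u j) - Y s\<bar> < e" "\<bar>Y (v j) - Y s\<bar> < e"
      using 1 uvj j(1,2) by (intro d2(2); simp)+
    then show ?thesis using Yu j(3) e by (simp add: abs_less_iff)
  next
    case 2
    have "\<bar>Y (u j) - L\<bar> < e" "\<bar>Y (v j) - L\<bar> < e"
      using 2 uvj u0 j(1,2) by (intro d1(2); simp)+
    then show ?thesis using Yu j(3) e by (simp add: abs_less_iff)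
  next
    case 3
    have "\<bar>Y (u j) - L\<bar> < e" "\<bar>Y (v j) - Y s\<bar> < e"
      using 3 u0 j(1,2) by (intro d1(2) d2(2); simp)+
    then show ?thesis using Yu j(3) e 3 u0 by (simp add: abs_less_iff)
  qed
  then show ?thesis by (simp add: Y_def L_def)
qed

lemma jumps_onto_if_shrinking_cells:
  assumes \<omega>: "\<omega> \<in> space M" and c: "0 < c"
    and u: "u \<longlonglongrightarrow> s" and v: "v \<longlonglongrightarrow> s" and uv: "\<And>j. 0 \<le> u j \<and> u j < v j"
    and below: "\<And>j. X (u j) \<omega> - b (u j) \<le> - c"
    and onto: "(\<lambda>j. X (v j) \<omega> - b (v j)) \<longlonglongrightarrow> 0"
  shows "jumps_onto X b \<omega>"
proof -
  note limit = shrinking_cells_limit[OF \<omega> u v uv below onto]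
  have "0 < s" "Xminus X s \<omega> < b s" using limit[of "c / 6"] c by auto
  moreover have "X s \<omega> = b s"
  proof (rule ccontr)
    assume "X s \<omega> \<noteq> b s"
    define e where "e = min (\<bar>X s \<omega> - b s\<bar> / 2) (c / 6)"
    have e: "0 < e" "e < c / 3" using \<open>X s \<omega> \<noteq> b s\<close> c by (auto simp: e_def)
    have "e \<le> \<bar>X s \<omega> - b s\<bar> / 2" unfolding e_def by (rule min.cobounded1)
    then show False using limit[OF e] by auto
  qed
  ultimately show ?thesis by (auto simp: jumps_onto_def)
qed

lemma jumps_onto_if_dyadic_crossing:
  assumes \<omega>: "\<omega> \<in> space M" and "dyadic_crossing X b \<omega>"
  shows "jumps_onto X b \<omega>"
proof -
  obtain i N nf kf where P: "\<And>j. j \<le> nf j \<and> (real (kf j) + 1) / 2 ^ nf j \<le> real N \<and>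
      X (real (kf j) / 2 ^ nf j) \<omega> - b (real (kf j) / 2 ^ nf j) \<le> - inverse (real (Suc i)) \<and>
      \<bar>X ((real (kf j) + 1) / 2 ^ nf j) \<omega> - b ((real (kf j) + 1) / 2 ^ nf j)\<bar> \<le> inverse (real (Suc j))"
    using assms(2) unfolding dyadic_crossing_def by metis
  define u where "u j = real (kf j) / 2 ^ nf j" for j
  define v where "v j = (real (kf j) + 1) / 2 ^ nf j" for j
  have uv: "v j = u j + 1 / 2 ^ nf j" for j by (simp add: u_def v_def add_divide_distrib)
  have "u j \<in> {0..real N}" for j
  proof -
    have "u j + 1 / 2 ^ nf j \<le> real N" "(0::real) < 1 / 2 ^ nf j"
      using P[of j] uv[of j] unfolding v_def[symmetric] by simp_all
    then have "u j \<le> real N" by linarith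
    then show ?thesis by (simp add: u_def)
  qed
  then obtain s r where r: "strict_mono r" and ur: "(u \<circ> r) \<longlonglongrightarrow> s"
    using compact_Icc[of 0 "real N", THEN compact_imp_seq_compact] unfolding seq_compact_def by metis
  have small: "1 / 2 ^ nf (r j) \<le> (1 / 2 :: real) ^ j" for j
  proof -
    have "j \<le> nf (r j)" using seq_suble[OF r, of j] P[of "r j"] by linarith
    then have "(2::real) ^ j \<le> 2 ^ nf (r j)" by (rule power_increasing) simp
    then show ?thesis by (simp add: power_one_over frac_le)
  qed
  have "(\<lambda>j. 1 / 2 ^ nf (r j) :: real) \<longlonglongrightarrow> 0"
    by (rule tendsto_sandwich[OF _ _ tendsto_const LIMSEQ_realpow_zero[of "1 / 2"]])
      (use small in \<open>auto intro!: always_eventually\<close>)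
  from tendsto_add[OF ur this] have vr: "(v \<circ> r) \<longlonglongrightarrow> s" by (simp add: o_def uv)
  have inv_r: "(\<lambda>j. inverse (real (Suc (r j)))) \<longlonglongrightarrow> 0"
    by (rule tendsto_sandwich[OF _ _ tendsto_const LIMSEQ_inverse_real_of_nat])
      (use seq_suble[OF r] in \<open>auto intro!: always_eventually le_imp_inverse_le\<close>)
  have Pv: "- inverse (real (Suc j)) \<le> X (v j) \<omega> - b (v j) \<and> X (v j) \<omega> - b (v j) \<le> inverse (real (Suc j))"
    for j using P[of j] unfolding v_def abs_le_iff by linarith
  have "(\<lambda>j. X (v (r j)) \<omega> - b (v (r j))) \<longlonglongrightarrow> 0"
    by (rule tendsto_sandwich[OF _ _ tendsto_minus[OF inv_r, unfolded minus_zero] inv_r])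
      (use Pv in \<open>blast intro: always_eventually\<close>)+
  then show ?thesis
    using P by (intro jumps_onto_if_shrinking_cells[OF \<omega> _ ur vr, of "inverse (real (Suc i))"])
      (auto simp: u_def v_def divide_strict_right_mono)
qed

lemma sets_jumps_onto: "{\<omega> \<in> space M. jumps_onto X b \<omega>} \<in> sets M"
proof -
  note X_measurable[measurable]
  have "{\<omega> \<in> space M. dyadic_crossing X b \<omega>} \<in> sets M"
    unfolding dyadic_crossing_def by measurable
  also have "{\<omega> \<in> space M. dyadic_crossing X b \<omega>} = {\<omega> \<in> space M. jumps_onto X b \<omega>}"
    using jumps_onto_if_dyadic_crossing dyadic_crossing_if_jumps_onto by blast
  finally show ?thesis .
qed

end

section \<open>Integrals against the compensator\<close>

lemma nn_integral_int_mu_eq_int_nu: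
  "is_compensator M F X \<nu> \<Longrightarrow> Ptilde_measurable M F W \<Longrightarrow>
    (\<integral>\<^sup>+ \<omega>. int_mu X W {0..} \<omega> \<partial>M) = (\<integral>\<^sup>+ \<omega>. int_nu \<nu> W {0..} \<omega> \<partial>M)"
  by (simp add: is_compensator_def)

lemma Ptilde_measurable_indicator:
  assumes S: "S \<in> sets (pred_sigma M F)"
    and B: "Measurable.pred (pred_sigma M F \<Otimes>\<^sub>M borel) (\<lambda>z. snd z \<in> B (fst (fst z)) (snd (fst z)))"
  shows "Ptilde_measurable M F (\<lambda>\<omega> t x. indicator {(\<omega>, t, x). (\<omega>, t) \<in> S \<and> x \<in> B \<omega> t} (\<omega>, t, x))"
proof -
  have [measurable]: "Measurable.pred (pred_sigma M F \<Otimes>\<^sub>M borel) (\<lambda>z. fst z \<in> S)"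
    by (rule pred_sets2[OF S measurable_fst])
  have "(\<lambda>((\<omega>, t), x). indicator {(\<omega>, t, x). (\<omega>, t) \<in> S \<and> x \<in> B \<omega> t} (\<omega>, t, x)) =
    (\<lambda>z. indicator {z. fst z \<in> S \<and> snd z \<in> B (fst (fst z)) (snd (fst z))} z :: ennreal)"
    by (auto simp: fun_eq_iff indicator_def)
  then show ?thesis unfolding Ptilde_measurable_def using B by simp
qed

lemma int_nu_Ici_eq_SUP:
  assumes sets: "sets (\<nu> \<omega>) = sets borel"
    and W: "(\<lambda>z. indicator ({0..} \<times> UNIV) z * W \<omega> (fst z) (snd z)) \<in> borel_measurable borel"
  shows "int_nu \<nu> W {0..} \<omega> = (SUP n. int_nu \<nu> W {0..real n} \<omega>)"
proof -
  define f where "f n z = indicator ({..real n} \<times> UNIV) z * (indicator ({0..} \<times> UNIV) z * W \<omega> (fst z) (snd z))"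
    for n :: nat and z :: "real \<times> real"
  have f: "f n \<in> borel_measurable (\<nu> \<omega>)" for n
    unfolding f_def measurable_cong_sets[OF sets refl]
    by (rule borel_measurable_times_ennreal[OF borel_measurable_indicator W])
      (auto intro!: borel_closed closed_Times)
  have inc: "incseq f"
    by (auto simp: incseq_def le_fun_def f_def indicator_def intro!: mult_right_mono)
  have SUP_f: "(SUP n. f n z) = indicator ({0..} \<times> UNIV) z * W \<omega> (fst z) (snd z)" for z
  proof (rule antisym)
    show "(SUP n. f n z) \<le> indicator ({0..} \<times> UNIV) z * W \<omega> (fst z) (snd z)"
      by (rule SUP_least) (auto simp: f_def indicator_def)
    obtain m :: nat where "fst z \<le> real m" using real_arch_simple by blast
    then have "f m z = indicator ({0..} \<times> UNIV) z * W \<omega> (fst z) (snd z)"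
      by (simp add: f_def indicator_def mem_Times_iff)
    then show "indicator ({0..} \<times> UNIV) z * W \<omega> (fst z) (snd z) \<le> (SUP n. f n z)"
      by (metis SUP_upper UNIV_I)
  qed
  have "int_nu \<nu> W {0..} \<omega> = (\<integral>\<^sup>+ z. (SUP n. f n z) \<partial>\<nu> \<omega>)"
    by (simp add: int_nu_def SUP_f)
  also have "\<dots> = (SUP n. integral\<^sup>N (\<nu> \<omega>) (f n))"
    by (rule nn_integral_monotone_convergence_SUP[OF inc f])
  also have "(\<lambda>n. integral\<^sup>N (\<nu> \<omega>) (f n)) = (\<lambda>n. int_nu \<nu> W {0..real n} \<omega>)"
    unfolding int_nu_def f_def by (intro ext nn_integral_cong) (auto simp: indicator_def mem_Times_iff)
  finally show ?thesis .
qed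

context filtration
begin

lemma Ptilde_measurable_path:
  assumes W: "Ptilde_measurable M F W" and \<omega>: "\<omega> \<in> space M"
  shows "(\<lambda>z. indicator ({0..} \<times> UNIV) z * W \<omega> (fst z) (snd z)) \<in> borel_measurable borel"
proof -
  have "(\<lambda>t. (\<omega>, max t 0)) \<in> borel \<rightarrow>\<^sub>M pred_sigma M F"
    using measurable_comp[OF measurable_restrict_space2[of "\<lambda>t. max t 0"] measurable_Pair_path[OF \<omega>]]
    by (simp add: o_def)
  then have "(\<lambda>z. ((\<omega>, max (fst z) 0), snd z)) \<in> borel \<Otimes>\<^sub>M borel \<rightarrow>\<^sub>M pred_sigma M F \<Otimes>\<^sub>M borel"
    by measurable
  from measurable_comp[OF this W[unfolded Ptilde_measurable_def]]
  have [measurable]: "(\<lambda>z. W \<omega> (max (fst z) 0) (snd z)) \<in> borel_measurable (borel \<Otimes>\<^sub>M borel)"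
    by (simp add: o_def)
  have [measurable]: "{0..} \<times> UNIV \<in> sets (borel \<Otimes>\<^sub>M (borel :: real measure) :: (real \<times> real) measure)"
    by (intro pair_measureI) auto
  have "(\<lambda>z. indicator ({0..} \<times> UNIV) z * W \<omega> (max (fst z) 0) (snd z)) \<in> borel_measurable (borel \<Otimes>\<^sub>M borel)"
    by measurable
  also have "(\<lambda>z. indicator ({0..} \<times> UNIV) z * W \<omega> (max (fst z) 0) (snd z)) =
     (\<lambda>z. indicator ({0..} \<times> UNIV) z * W \<omega> (fst z) (snd z))"
    by (auto simp: fun_eq_iff indicator_def mem_Times_iff)
  finally show ?thesis by (simp add: borel_prod)
qed

lemma borel_measurable_int_nu:
  assumes comp: "is_compensator M F X \<nu>" and W: "Ptilde_measurable M F W"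
  shows "(\<lambda>\<omega>. int_nu \<nu> W {0..} \<omega>) \<in> borel_measurable M"
proof -
  have "(\<lambda>(\<omega>, t). int_nu \<nu> W {0..t} \<omega>) \<in> borel_measurable (pred_sigma M F)"
    using comp W unfolding is_compensator_def predictable_process_def by blast
  then have "(\<lambda>\<omega>. int_nu \<nu> W {0..real n} \<omega>) \<in> borel_measurable M" for n
    using borel_measurable_pred_sigma_time[of "\<lambda>(\<omega>, t). int_nu \<nu> W {0..t} \<omega>" "real n"] by simp
  then have "(\<lambda>\<omega>. SUP n. int_nu \<nu> W {0..real n} \<omega>) \<in> borel_measurable M"
    by measurable
  moreover have "int_nu \<nu> W {0..} \<omega> = (SUP n. int_nu \<nu> W {0..real n} \<omega>)" if "\<omega> \<in> space M" for \<omega>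
    using comp that by (intro int_nu_Ici_eq_SUP Ptilde_measurable_path[OF W]) (auto simp: is_compensator_def)
  ultimately show ?thesis by (simp cong: measurable_cong)
qed

lemma int_nu_Ici_eq_0:
  assumes "is_compensator M F X \<nu>" "Ptilde_measurable M F W" "\<omega> \<in> space M"
    and "\<forall>t\<ge>0. int_nu \<nu> W {0..t} \<omega> = 0"
  shows "int_nu \<nu> W {0..} \<omega> = 0"
  using assms by (subst int_nu_Ici_eq_SUP) (auto simp: is_compensator_def intro: Ptilde_measurable_path)

end

context boundary_crossing
begin

lemma J0_null_if_AE_int_nu_Gamma0_zero:
  assumes X0: "\<forall>\<omega>\<in>space M. X 0 \<omega> < b 0" and comp: "is_compensator M F X \<nu>"
    and zero: "AE \<omega> in M. int_nu \<nu> (\<lambda>\<omega> t x. indicator (Gamma0 X b) (\<omega>, t, x)) {0..} \<omega> = 0"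
  shows "J0 M X b \<in> null_sets M"
proof -
  let ?W = "\<lambda>\<omega> t x. indicator (Gamma0 X b) (\<omega>, t, x) :: ennreal"
  define E where "E = {\<omega> \<in> space M. jumps_onto X b \<omega>}"
  have E: "E \<in> sets M" unfolding E_def by (rule sets_jumps_onto)
  have "emeasure M E = (\<integral>\<^sup>+ \<omega>. indicator E \<omega> \<partial>M)" using E by simp
  also have "\<dots> \<le> (\<integral>\<^sup>+ \<omega>. int_mu X ?W {0..} \<omega> \<partial>M)"
    by (intro nn_integral_mono) (auto simp: E_def indicator_def intro: one_le_int_mu_Gamma0[unfolded indicator_def])
  also have "\<dots> = (\<integral>\<^sup>+ \<omega>. int_nu \<nu> ?W {0..} \<omega> \<partial>M)"
    by (rule nn_integral_int_mu_eq_int_nu[OF comp Ptilde_measurable_Gamma0])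
  also have "\<dots> = 0" using nn_integral_cong_AE[OF zero] by simp
  finally have "E \<in> null_sets M" using E by (simp add: null_sets_def)
  moreover have "J0 M X b \<subseteq> E"
    using jumps_onto_if_J0[OF X0] by (auto simp: E_def J0_def)
  moreover have "J0 M X b \<in> sets M"
    using usual_conditions calculation unfolding usual_conditions_def by blast
  ultimately show ?thesis by (blast intro: null_sets_subset)
qed

end

section \<open>Counting big jumps on dyadic grids\<close>

definition osc_breakpoints :: "(real \<Rightarrow> real) \<Rightarrow> real \<Rightarrow> real \<Rightarrow> real set \<Rightarrow> bool" where
  "osc_breakpoints f e T P \<longleftrightarrow> finite P \<and> P \<subseteq> {0..T} \<and>
     (\<forall>u v. 0 \<le> u \<and> u < v \<and> v \<le> T \<and> (\<forall>p\<in>P. \<not> (u < p \<and> p \<le> v)) \<longrightarrow> \<bar>f v - f u\<bar> \<le> e)"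

lemma osc_breakpoints_extend:
  assumes P: "osc_breakpoints f e r P" and r: "0 \<le> r" "r \<le> T"
    and small: "\<And>u v. r \<le> u \<Longrightarrow> u < v \<Longrightarrow> v < T \<Longrightarrow> \<bar>f v - f u\<bar> \<le> e"
  shows "osc_breakpoints f e T (P \<union> {r, T})"
  unfolding osc_breakpoints_def
proof (intro conjI allI impI)
  fix u v assume uv: "0 \<le> u \<and> u < v \<and> v \<le> T \<and> (\<forall>p\<in>P \<union> {r, T}. \<not> (u < p \<and> p \<le> v))"
  show "\<bar>f v - f u\<bar> \<le> e"
  proof (cases "v \<le> r")
    case True
    then show ?thesis using P uv unfolding osc_breakpoints_def by blast
  next
    case False
    then have "r \<le> u" "v < T" using uv by (auto simp: not_le le_less)
    then show ?thesis using small uv by blast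
  qed
qed (use P r in \<open>auto simp: osc_breakpoints_def\<close>)

lemma osc_breakpoints_extend_left:
  fixes f :: "real \<Rightarrow> real"
  assumes "(f \<longlongrightarrow> L) (at_left r)" "0 < e"
  shows "\<exists>\<delta>>0. \<forall>r' P. r - \<delta> < r' \<longrightarrow> r' \<le> r \<longrightarrow> 0 \<le> r' \<longrightarrow> osc_breakpoints f e r' P \<longrightarrow>
    osc_breakpoints f e r (P \<union> {r', r})"
proof -
  obtain \<delta> where \<delta>: "\<delta> > 0" "\<And>w. r - \<delta> < w \<Longrightarrow> w < r \<Longrightarrow> \<bar>f w - L\<bar> < e / 2"
    using tendsto_at_left_nbhd[OF assms(1), of "e / 2"] assms(2) by auto
  have small: "\<bar>f v - f u\<bar> \<le> e" if "r - \<delta> < u" "u < v" "v < r" for u v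
  proof -
    have "\<bar>f u - L\<bar> < e / 2" "\<bar>f v - L\<bar> < e / 2" using \<delta>(2) that by auto
    then show ?thesis unfolding abs_less_iff abs_le_iff by linarith
  qed
  show ?thesis
  proof (intro exI[of _ \<delta>] conjI allI impI)
    fix r' P assume "r - \<delta> < r'" "r' \<le> r" "0 \<le> r'" "osc_breakpoints f e r' P"
    then show "osc_breakpoints f e r (P \<union> {r', r})"
      by (intro osc_breakpoints_extend) (auto intro: small)
  qed (rule \<delta>(1))
qed

lemma osc_breakpoints_extend_right:
  fixes f :: "real \<Rightarrow> real"
  assumes "continuous (at_right r) f" "0 \<le> r" "0 < e"
  shows "\<exists>\<delta>>0. \<forall>r'' P. r \<le> r'' \<longrightarrow> r'' < r + \<delta> \<longrightarrow> osc_breakpoints f e r P \<longrightarrow>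
    osc_breakpoints f e r'' (P \<union> {r, r''})"
proof -
  obtain \<delta> where \<delta>: "\<delta> > 0" "\<And>w. r \<le> w \<Longrightarrow> w < r + \<delta> \<Longrightarrow> \<bar>f w - f r\<bar> < e / 2"
    using continuous_at_right_nbhd[OF assms(1), of "e / 2"] assms(3) by auto
  have small: "\<bar>f v - f u\<bar> \<le> e" if "r \<le> u" "u < v" "v < r + \<delta>" for u v
  proof -
    have "\<bar>f u - f r\<bar> < e / 2" "\<bar>f v - f r\<bar> < e / 2" using \<delta>(2) that by auto
    then show ?thesis unfolding abs_less_iff abs_le_iff by linarith
  qed
  show ?thesis
  proof (intro exI[of _ \<delta>] conjI allI impI)
    fix r'' P assume "r \<le> r''" "r'' < r + \<delta>" "osc_breakpoints f e r P"
    then show "osc_breakpoints f e r'' (P \<union> {r, r''})"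
      using assms(2) by (intro osc_breakpoints_extend) (auto intro: small)
  qed (rule \<delta>(1))
qed

lemma osc_breakpoints_exist:
  fixes f :: "real \<Rightarrow> real"
  assumes T: "0 \<le> T" and e: "0 < e"
    and right: "\<And>s. 0 \<le> s \<Longrightarrow> continuous (at_right s) f"
    and left: "\<And>s. 0 < s \<Longrightarrow> \<exists>L. (f \<longlongrightarrow> L) (at_left s)"
  shows "\<exists>P. osc_breakpoints f e T P"
proof -
  define S where "S = {r \<in> {0..T}. \<exists>P. osc_breakpoints f e r P}"
  have "osc_breakpoints f e 0 {}" by (simp add: osc_breakpoints_def)
  then have "0 \<in> S" using T unfolding S_def by auto
  have bdd: "bdd_above S" unfolding S_def by (rule bdd_aboveI[of _ T]) simp
  define r where "r = Sup S"
  have r: "0 \<le> r" "r \<le> T"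
    unfolding r_def by (rule cSup_upper[OF \<open>0 \<in> S\<close> bdd], rule cSup_least) (use \<open>0 \<in> S\<close> in \<open>auto simp: S_def\<close>)
  have "r \<in> S"
  proof (cases "r = 0")
    case False
    with r obtain L where "(f \<longlongrightarrow> L) (at_left r)" using left by force
    then obtain \<delta> where \<delta>: "\<delta> > 0" "\<And>r' P. r - \<delta> < r' \<Longrightarrow> r' \<le> r \<Longrightarrow> 0 \<le> r' \<Longrightarrow>
        osc_breakpoints f e r' P \<Longrightarrow> osc_breakpoints f e r (P \<union> {r', r})"
      using osc_breakpoints_extend_left e by blast
    have "r - \<delta> < Sup S" using \<delta>(1) by (simp add: r_def[symmetric])
    then obtain r' where "r' \<in> S" "r - \<delta> < r'"
      using less_cSup_iff[OF _ bdd] \<open>0 \<in> S\<close> by blast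
    moreover have "r' \<le> r" unfolding r_def by (rule cSup_upper[OF \<open>r' \<in> S\<close> bdd])
    moreover obtain P where "osc_breakpoints f e r' P" "0 \<le> r'"
      using \<open>r' \<in> S\<close> by (auto simp: S_def)
    ultimately have "osc_breakpoints f e r (P \<union> {r', r})" using \<delta>(2) by blast
    then show ?thesis using r unfolding S_def by (intro CollectI conjI exI) auto
  qed (use \<open>0 \<in> S\<close> in \<open>simp only:\<close>)
  moreover have "r = T"
  proof (rule ccontr)
    assume "r \<noteq> T"
    obtain \<delta> where \<delta>: "\<delta> > 0" "\<And>r'' P. r \<le> r'' \<Longrightarrow> r'' < r + \<delta> \<Longrightarrow>
        osc_breakpoints f e r P \<Longrightarrow> osc_breakpoints f e r'' (P \<union> {r, r''})"
      using osc_breakpoints_extend_right[OF right[OF r(1)] r(1) e] by blast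
    define r'' where "r'' = min (r + \<delta> / 2) T"
    have r'': "r < r''" "r'' \<le> T" "r'' < r + \<delta>" using r \<open>r \<noteq> T\<close> \<delta>(1) by (auto simp: r''_def)
    obtain P where "osc_breakpoints f e r P" using \<open>r \<in> S\<close> by (auto simp: S_def)
    then have "osc_breakpoints f e r'' (P \<union> {r, r''})" using r'' by (intro \<delta>(2)) auto
    then have "r'' \<in> S" using r r'' unfolding S_def by (intro CollectI conjI exI) auto
    then have "r'' \<le> r" unfolding r_def by (rule cSup_upper[OF _ bdd])
    then show False using r'' by simp
  qed
  ultimately show ?thesis unfolding S_def by blast
qed

lemma osc_breakpointsD:
  assumes "osc_breakpoints f e T P" "0 \<le> u" "u < v" "v \<le> T" "\<And>p. p \<in> P \<Longrightarrow> \<not> (u < p \<and> p \<le> v)"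
  shows "\<bar>f v - f u\<bar> \<le> e"
  using assms unfolding osc_breakpoints_def by blast

lemma card_big_dyadic_increments_le:
  assumes P: "osc_breakpoints f e T P"
  shows "finite {k. (real k + 1) / 2 ^ n \<le> T \<and> e < \<bar>f ((real k + 1) / 2 ^ n) - f (real k / 2 ^ n)\<bar>}"
    and "card {k. (real k + 1) / 2 ^ n \<le> T \<and> e < \<bar>f ((real k + 1) / 2 ^ n) - f (real k / 2 ^ n)\<bar>} \<le> card P"
proof -
  let ?S = "{k. (real k + 1) / 2 ^ n \<le> T \<and> e < \<bar>f ((real k + 1) / 2 ^ n) - f (real k / 2 ^ n)\<bar>}"
  have "?S \<subseteq> dyadic_index n ` P"
  proof
    fix k assume k: "k \<in> ?S"
    have "\<exists>p\<in>P. real k / 2 ^ n < p \<and> p \<le> (real k + 1) / 2 ^ n"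
    proof (rule ccontr)
      assume "\<not> ?thesis"
      then have "\<bar>f ((real k + 1) / 2 ^ n) - f (real k / 2 ^ n)\<bar> \<le> e"
        using k by (intro osc_breakpointsD[OF P]) (auto simp: divide_strict_right_mono)
      then show False using k by simp
    qed
    then show "k \<in> dyadic_index n ` P" using dyadic_index_unique by blast
  qed
  moreover have "finite P" using P by (simp add: osc_breakpoints_def)
  ultimately show "finite ?S" "card ?S \<le> card P"
    by (auto intro: finite_subset order_trans[OF card_mono card_image_le])
qed


definition big_increments :: "(real \<Rightarrow> 'a \<Rightarrow> real) \<Rightarrow> real \<Rightarrow> nat \<Rightarrow> 'a \<Rightarrow> real \<Rightarrow> nat set" where
  "big_increments X c n \<omega> t =
     {k. (real k + 1) / 2 ^ n < t \<and> c < \<bar>X ((real k + 1) / 2 ^ n) \<omega> - X (real k / 2 ^ n) \<omega>\<bar>}"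

text \<open>A predictable substitute for ``at most \<open>m\<close> jumps larger than \<open>c\<close> before time \<open>t\<close>''.\<close>
definition few_big_increments :: "'a measure \<Rightarrow> (real \<Rightarrow> 'a \<Rightarrow> real) \<Rightarrow> real \<Rightarrow> nat \<Rightarrow> ('a \<times> real) set" where
  "few_big_increments M X c m =
     {x \<in> space M \<times> {0..}. \<forall>n. card (big_increments X c n (fst x) (snd x)) \<le> m}"

lemma finite_big_increments: "finite (big_increments X c n \<omega> t)"
proof (rule finite_subset)
  show "big_increments X c n \<omega> t \<subseteq> {..nat \<lceil>2 ^ n * t\<rceil>}"
  proof
    fix k assume "k \<in> big_increments X c n \<omega> t"
    then have "real k < 2 ^ n * t"
      by (simp add: big_increments_def divide_less_eq mult.commute)
    then have "int k \<le> \<lceil>2 ^ n * t\<rceil>" by linarith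
    then show "k \<in> {..nat \<lceil>2 ^ n * t\<rceil>}" by simp
  qed
qed simp

lemma dyadic_index_eq_close:
  assumes "0 < u" "0 < u'" "dyadic_index n u = dyadic_index n u'"
  shows "\<bar>u - u'\<bar> < 1 / 2 ^ n"
  using dyadic_index_bounds[OF assms(1), of n] dyadic_index_bounds[OF assms(2), of n] assms(3)
  by (simp add: add_divide_distrib abs_less_iff)

context cadlag_adapted
begin

lemma bounded_card_big_increments:
  assumes \<omega>: "\<omega> \<in> space M" and t: "0 \<le> t" and c: "0 < c"
  shows "\<exists>m. \<forall>n. card (big_increments X c n \<omega> t) \<le> m"
proof -
  obtain P where P: "osc_breakpoints (\<lambda>s. X s \<omega>) c t P"
    using osc_breakpoints_exist[OF t c] cadlag_continuous_at_right[OF cadlag_X \<omega>]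
      cadlag_tendsto_Xminus[OF cadlag_X \<omega>] by blast
  have "card (big_increments X c n \<omega> t) \<le> card P" for n
  proof -
    have "big_increments X c n \<omega> t \<subseteq>
        {k. (real k + 1) / 2 ^ n \<le> t \<and> c < \<bar>X ((real k + 1) / 2 ^ n) \<omega> - X (real k / 2 ^ n) \<omega>\<bar>}"
      by (auto simp: big_increments_def)
    then show ?thesis
      by (rule order_trans[OF card_mono[OF card_big_dyadic_increments_le(1)[OF P]]
          card_big_dyadic_increments_le(2)[OF P]])
  qed
  then show ?thesis by blast
qed

lemma sets_few_big_increments: "few_big_increments M X c m \<in> sets (pred_sigma M F)"
proof -
  define G where "G n k = {\<omega> \<in> space M. c < \<bar>X ((real k + 1) / 2 ^ n) \<omega> - X (real k / 2 ^ n) \<omega>\<bar>} \<times>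
    {(real k + 1) / 2 ^ n<..}" for n k :: nat
  have "G n k \<in> sets (pred_sigma M F)" for n k
  proof -
    let ?s = "(real k + 1) / 2 ^ n"
    have "subalgebra (F ?s) (F (real k / 2 ^ n))"
      using sets_F_mono[of "real k / 2 ^ n" ?s] by (simp add: subalgebra_def space_F divide_right_mono)
    then have "X (real k / 2 ^ n) \<in> borel_measurable (F ?s)"
      by (rule measurable_from_subalg) (use adapted_X in \<open>simp add: adapted_def\<close>)
    moreover have "X ?s \<in> borel_measurable (F ?s)" using adapted_X by (simp add: adapted_def)
    ultimately have "{\<omega> \<in> space (F ?s). c < \<bar>X ?s \<omega> - X (real k / 2 ^ n) \<omega>\<bar>} \<in> sets (F ?s)"
      by measurable
    then show ?thesis unfolding G_def space_F by (intro pred_sigma_Times_Ioi) auto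
  qed
  then have [measurable]: "(\<lambda>x. \<Sum>k. indicator (G n k) x :: ennreal) \<in> borel_measurable (pred_sigma M F)" for n
    by (intro borel_measurable_suminf_order borel_measurable_indicator)
  have count: "(\<Sum>k. indicator (G n k) x :: ennreal) = of_nat (card (big_increments X c n (fst x) (snd x)))"
    if "x \<in> space M \<times> {0..}" for n x
  proof -
    have "(\<lambda>k. indicator (G n k) x :: ennreal) = indicator (big_increments X c n (fst x) (snd x))"
      using that by (auto simp: fun_eq_iff indicator_def G_def big_increments_def)
    moreover have "(\<Sum>k. indicator (big_increments X c n (fst x) (snd x)) k :: ennreal) =
        (\<Sum>k\<in>big_increments X c n (fst x) (snd x). indicator (big_increments X c n (fst x) (snd x)) k)"
      by (rule suminf_finite[OF finite_big_increments]) simp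
    ultimately show ?thesis by simp
  qed
  have "{x \<in> space (pred_sigma M F). \<forall>n. (\<Sum>k. indicator (G n k) x) \<le> (of_nat m :: ennreal)}
      \<in> sets (pred_sigma M F)"
    by measurable
  also have "{x \<in> space (pred_sigma M F). \<forall>n. (\<Sum>k. indicator (G n k) x) \<le> (of_nat m :: ennreal)} =
      few_big_increments M X c m"
    by (auto simp: few_big_increments_def space_pred_sigma count)
  finally show ?thesis .
qed

lemma eventually_jump_in_big_increments:
  assumes \<omega>: "\<omega> \<in> space M" and u: "0 < u" "u < t" and c: "c < \<bar>jump X u \<omega>\<bar>"
  shows "\<forall>\<^sub>F n in sequentially. dyadic_index n u \<in> big_increments X c n \<omega> t"
proof -
  define l where "l n = real (dyadic_index n u) / 2 ^ n" for n
  define r where "r n = (real (dyadic_index n u) + 1) / 2 ^ n" for n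
  have r: "r \<longlonglongrightarrow> u" unfolding r_def by (rule dyadic_index_tendsto(2)[OF u(1)])
  have "(\<lambda>n. X (r n) \<omega>) \<longlonglongrightarrow> X u \<omega>"
    using cadlag_continuous_at_right[OF cadlag_X \<omega>, of u] u(1) dyadic_index_bounds(2)[OF u(1)]
    unfolding at_within_Ici_at_right[symmetric]
    by (intro continuous_within_tendsto_compose'[OF _ _ r]) (auto simp: r_def)
  moreover have "(\<lambda>n. X (l n) \<omega>) \<longlonglongrightarrow> Xminus X u \<omega>"
    unfolding l_def
    by (rule filterlim_compose[OF cadlag_tendsto_Xminus[OF cadlag_X \<omega> u(1)] dyadic_index_tendsto_at_left[OF u(1)]])
  ultimately have "(\<lambda>n. \<bar>X (r n) \<omega> - X (l n) \<omega>\<bar>) \<longlonglongrightarrow> \<bar>jump X u \<omega>\<bar>"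
    unfolding jump_def by (intro tendsto_rabs tendsto_diff)
  from order_tendstoD(1)[OF this c] order_tendstoD(2)[OF r u(2)]
  show ?thesis
    by eventually_elim (simp add: big_increments_def l_def r_def)
qed

lemma card_le_card_big_increments:
  assumes \<omega>: "\<omega> \<in> space M" and U: "finite U"
    and jumps: "\<And>u. u \<in> U \<Longrightarrow> 0 < u \<and> u < t \<and> c < \<bar>jump X u \<omega>\<bar>"
  shows "\<exists>n. card U \<le> card (big_increments X c n \<omega> t)"
proof -
  have "\<forall>\<^sub>F n in sequentially. \<forall>u\<in>U. dyadic_index n u \<in> big_increments X c n \<omega> t"
    using jumps by (intro eventually_ball_finite[OF U] ballI eventually_jump_in_big_increments[OF \<omega>]) auto
  moreover have "\<forall>\<^sub>F n in sequentially. \<forall>u\<in>U. \<forall>u'\<in>U. u \<noteq> u' \<longrightarrow> dyadic_index n u \<noteq> dyadic_index n u'"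
  proof (intro eventually_ball_finite[OF U] ballI)
    fix u u' assume "u \<in> U" "u' \<in> U"
    show "\<forall>\<^sub>F n in sequentially. u \<noteq> u' \<longrightarrow> dyadic_index n u \<noteq> dyadic_index n u'"
    proof (cases "u = u'")
      case False
      then have "0 < \<bar>u - u'\<bar>" by simp
      then show ?thesis
      proof (rule eventually_mono[OF eventually_inverse_two_power_less])
        fix n assume "1 / 2 ^ n < \<bar>u - u'\<bar>"
        then show "u \<noteq> u' \<longrightarrow> dyadic_index n u \<noteq> dyadic_index n u'"
          using dyadic_index_eq_close[of u u' n] jumps[OF \<open>u \<in> U\<close>] jumps[OF \<open>u' \<in> U\<close>] by auto
      qed
    qed simp
  qed
  ultimately have "\<forall>\<^sub>F n in sequentially. (\<forall>u\<in>U. dyadic_index n u \<in> big_increments X c n \<omega> t) \<and>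
      inj_on (dyadic_index n) U"
    unfolding inj_on_def by eventually_elim blast
  then obtain n where n: "\<forall>u\<in>U. dyadic_index n u \<in> big_increments X c n \<omega> t"
      "inj_on (dyadic_index n) U"
    using eventually_happens'[OF sequentially_bot] by blast
  have "card U = card (dyadic_index n ` U)" using card_image[OF n(2)] by simp
  also have "\<dots> \<le> card (big_increments X c n \<omega> t)"
    using n(1) by (intro card_mono[OF finite_big_increments]) auto
  finally show ?thesis by blast
qed

lemma finite_big_jumps:
  assumes \<omega>: "\<omega> \<in> space M"
  shows "finite {u. 0 < u \<and> (\<omega>, u) \<in> few_big_increments M X c m \<and> c < \<bar>jump X u \<omega>\<bar>}"
    and "card {u. 0 < u \<and> (\<omega>, u) \<in> few_big_increments M X c m \<and> c < \<bar>jump X u \<omega>\<bar>} \<le> Suc m"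
proof -
  define U where "U = {u. 0 < u \<and> (\<omega>, u) \<in> few_big_increments M X c m \<and> c < \<bar>jump X u \<omega>\<bar>}"
  have bound: "card U' \<le> Suc m" if U': "finite U'" "U' \<subseteq> U" for U'
  proof (cases "U' = {}")
    case False
    define s where "s = Max U'"
    have s: "s \<in> U'" using Max_in[OF U'(1) False] by (simp add: s_def)
    have "0 < u \<and> u < s \<and> c < \<bar>jump X u \<omega>\<bar>" if "u \<in> U' - {s}" for u
    proof -
      have "u \<le> s" using that Max_ge[OF U'(1)] by (simp add: s_def)
      then show ?thesis using that U'(2) by (auto simp: U_def)
    qed
    then obtain n where "card (U' - {s}) \<le> card (big_increments X c n \<omega> s)"
      using card_le_card_big_increments[OF \<omega>] U'(1) by blast
    moreover have "card (big_increments X c n \<omega> s) \<le> m"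
      using s U'(2) by (auto simp: U_def few_big_increments_def)
    ultimately show ?thesis
      using card.remove[OF U'(1) s] by simp
  qed simp
  have "finite U"
  proof (rule ccontr)
    assume "infinite U"
    then obtain U' where "finite U'" "card U' = Suc (Suc m)" "U' \<subseteq> U"
      using infinite_arbitrarily_large by blast
    then show False using bound by fastforce
  qed
  then show "finite U" "card U \<le> Suc m" using bound by auto
qed

end

section \<open>Compensators with a diffuse disintegration\<close>

lemma ennreal_between_inverse_Suc:
  fixes v :: ennreal
  assumes "0 < v" "v < \<top>"
  shows "\<exists>j. ennreal (1 / real (Suc j)) \<le> v \<and> v \<le> ennreal (real (Suc j))"
proof -
  obtain r where r: "v = ennreal r" "0 < r" using assms by (cases v) auto
  obtain j1 :: nat where j1: "1 / r \<le> real j1" using real_arch_simple by blast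
  obtain j2 :: nat where j2: "r \<le> real j2" using real_arch_simple by blast
  define j where "j = max j1 j2"
  have "1 / r \<le> real (Suc j)" using j1 by (simp add: j_def)
  then have "1 \<le> r * real (Suc j)" using r(2) by (simp add: divide_le_eq mult.commute)
  then have "1 / real (Suc j) \<le> r" by (simp add: divide_le_eq mult.commute)
  moreover have "r \<le> real (Suc j)" using j2 by (simp add: j_def)
  ultimately show ?thesis unfolding r(1) by (blast intro: ennreal_leI)
qed

locale diffuse_disintegration = boundary_crossing M F X b
  for M :: "'a measure" and F :: "real \<Rightarrow> 'a measure" and X :: "real \<Rightarrow> 'a \<Rightarrow> real"
    and b :: "real \<Rightarrow> real" +
  fixes \<nu> :: "'a \<Rightarrow> (real \<times> real) measure"
    and A :: "real \<Rightarrow> 'a \<Rightarrow> real" and K :: "'a \<Rightarrow> real \<Rightarrow> real measure"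
  assumes prob_space_M: "prob_space M"
    and compensator: "is_compensator M F X \<nu>"
    and disintegration: "predictable_disintegration M F \<nu> A K"
begin

lemma sets_nu: "\<omega> \<in> space M \<Longrightarrow> sets (\<nu> \<omega>) = sets borel"
  using compensator unfolding is_compensator_def by blast

lemma sets_K: "\<omega> \<in> space M \<Longrightarrow> 0 \<le> t \<Longrightarrow> sets (K \<omega> t) = sets borel"
  using disintegration unfolding predictable_disintegration_def by blast

lemma K_measurable:
  "B \<in> sets borel \<Longrightarrow> (\<lambda>x. emeasure (K (fst x) (snd x)) B) \<in> borel_measurable (pred_sigma M F)"
  using disintegration unfolding predictable_disintegration_def by (simp add: case_prod_beta')

lemma emeasure_nu: "\<omega> \<in> space M \<Longrightarrow> C \<in> sets borel \<Longrightarrow>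
    emeasure (\<nu> \<omega>) C = (\<integral>\<^sup>+ t. indicator {0..} t * emeasure (K \<omega> t) (Pair t -` C) \<partial>dA A \<omega>)"
  using disintegration unfolding predictable_disintegration_def by blast

lemma sets_dA[simp]: "sets (dA A \<omega>) = sets borel"
  by (simp add: dA_def)

definition non_diffuse :: "'a \<Rightarrow> real set" where
  "non_diffuse \<omega> = {t. 0 \<le> t \<and> \<not> (\<forall>x. emeasure (K \<omega> t) {x} = 0)}"

lemma nn_integral_non_diffuse:
  "(\<integral>\<^sup>+ \<omega>. (\<integral>\<^sup>+ t. indicator (non_diffuse \<omega>) t \<partial>dA A \<omega>) \<partial>M) = 0"
  using disintegration unfolding predictable_disintegration_def non_diffuse_def by blast

definition gap :: "'a \<Rightarrow> real \<Rightarrow> real" where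
  "gap \<omega> t = b t - Xminus X t \<omega>"

lemma gap_measurable[measurable]: "(\<lambda>x. gap (fst x) (snd x)) \<in> borel_measurable (pred_sigma M F)"
  unfolding gap_def by measurable

lemma int_nu_section:
  assumes \<omega>: "\<omega> \<in> space M" and S: "S \<in> sets (pred_sigma M F)"
    and W: "Ptilde_measurable M F (\<lambda>\<omega> t x. indicator {(\<omega>, t, x). (\<omega>, t) \<in> S \<and> x \<in> B \<omega> t} (\<omega>, t, x))"
  shows "int_nu \<nu> (\<lambda>\<omega> t x. indicator {(\<omega>, t, x). (\<omega>, t) \<in> S \<and> x \<in> B \<omega> t} (\<omega>, t, x)) {0..} \<omega> =
    (\<integral>\<^sup>+ t. indicator {t. (\<omega>, t) \<in> S} t * emeasure (K \<omega> t) (B \<omega> t) \<partial>dA A \<omega>)"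
proof -
  define C where "C = {z :: real \<times> real. 0 \<le> fst z \<and> (\<omega>, fst z) \<in> S \<and> snd z \<in> B \<omega> (fst z)}"
  have C_eq: "(\<lambda>z. indicator ({0..} \<times> UNIV) z *
      indicator {(\<omega>, t, x). (\<omega>, t) \<in> S \<and> x \<in> B \<omega> t} (\<omega>, fst z, snd z)) = (indicator C :: _ \<Rightarrow> ennreal)"
    by (auto simp: fun_eq_iff indicator_def C_def mem_Times_iff)
  have "C \<in> sets borel"
    using Ptilde_measurable_path[OF W \<omega>] unfolding C_eq borel_measurable_indicator_iff by simp
  have S_nonneg: "(\<omega>, t) \<in> S \<Longrightarrow> 0 \<le> t" for t
    using sets.sets_into_space[OF S] by (auto simp: space_pred_sigma)
  have "int_nu \<nu> (\<lambda>\<omega> t x. indicator {(\<omega>, t, x). (\<omega>, t) \<in> S \<and> x \<in> B \<omega> t} (\<omega>, t, x)) {0..} \<omega> =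
      emeasure (\<nu> \<omega>) C"
    unfolding int_nu_def C_eq using \<open>C \<in> sets borel\<close> sets_nu[OF \<omega>] by simp
  also have "\<dots> = (\<integral>\<^sup>+ t. indicator {0..} t * emeasure (K \<omega> t) (Pair t -` C) \<partial>dA A \<omega>)"
    by (rule emeasure_nu[OF \<omega> \<open>C \<in> sets borel\<close>])
  also have "\<dots> = (\<integral>\<^sup>+ t. indicator {t. (\<omega>, t) \<in> S} t * emeasure (K \<omega> t) (B \<omega> t) \<partial>dA A \<omega>)"
    by (intro nn_integral_cong) (auto simp: C_def indicator_def S_nonneg)
  finally show ?thesis .
qed

definition below :: "('a \<times> real) set" where
  "below = {x \<in> space M \<times> {0..}. Xminus X (snd x) (fst x) < b (snd x)}"

definition cell_mass :: "nat \<Rightarrow> 'a \<Rightarrow> real \<Rightarrow> ennreal" where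
  "cell_mass n \<omega> t = emeasure (K \<omega> t) (dyadic_cell n (gap \<omega> t))"

text \<open>Where some dyadic cell around the gap has finite \<open>K\<close>-mass, the cell masses decrease to the
  atom of \<open>K\<close> at the gap. Where all of them are infinite they say nothing about the atom; that
  set is shown to be \<open>dA\<close>-null by a separate argument.\<close>
definition atom_set :: "('a \<times> real) set" where
  "atom_set = {x \<in> below. (\<exists>n. cell_mass n (fst x) (snd x) < \<infinity>) \<and> 0 < (INF n. cell_mass n (fst x) (snd x))}"

definition infinite_mass_set :: "('a \<times> real) set" where
  "infinite_mass_set = {x \<in> below. \<forall>n. cell_mass n (fst x) (snd x) = \<infinity>}"

lemma cell_mass_measurable[measurable]:
  "(\<lambda>x. cell_mass n (fst x) (snd x)) \<in> borel_measurable (pred_sigma M F)"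
proof -
  have "(\<lambda>x. (\<lambda>j x. emeasure (K (fst x) (snd x)) {real_of_int j / 2 ^ n ..< (real_of_int j + 1) / 2 ^ n})
      \<lfloor>2 ^ n * gap (fst x) (snd x)\<rfloor> x) \<in> borel_measurable (pred_sigma M F)"
    by (rule measurable_compose_countable[OF K_measurable]) auto
  then show ?thesis by (simp add: cell_mass_def dyadic_cell_def)
qed

lemma sets_below: "below \<in> sets (pred_sigma M F)"
proof -
  have "below = {x \<in> space (pred_sigma M F). Xminus X (snd x) (fst x) < b (snd x)}"
    by (auto simp: below_def space_pred_sigma)
  also have "\<dots> \<in> sets (pred_sigma M F)" by measurable
  finally show ?thesis .
qed

lemma sets_atom_set: "atom_set \<in> sets (pred_sigma M F)"
proof -
  have "atom_set = {x \<in> space (pred_sigma M F). Xminus X (snd x) (fst x) < b (snd x) \<and>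
       (\<exists>n. cell_mass n (fst x) (snd x) < \<infinity>) \<and> 0 < (INF n. cell_mass n (fst x) (snd x))}"
    by (auto simp: atom_set_def below_def space_pred_sigma)
  also have "\<dots> \<in> sets (pred_sigma M F)" by measurable
  finally show ?thesis .
qed

lemma sets_infinite_mass_set: "infinite_mass_set \<in> sets (pred_sigma M F)"
proof -
  have "infinite_mass_set = {x \<in> space (pred_sigma M F). Xminus X (snd x) (fst x) < b (snd x) \<and>
       (\<forall>n. cell_mass n (fst x) (snd x) = \<infinity>)}"
    by (auto simp: infinite_mass_set_def below_def space_pred_sigma)
  also have "\<dots> \<in> sets (pred_sigma M F)" by measurable
  finally show ?thesis .
qed

lemma emeasure_K_gap:
  assumes "(\<omega>, t) \<in> below" "\<exists>n. cell_mass n \<omega> t < \<infinity>"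
  shows "emeasure (K \<omega> t) {gap \<omega> t} = (INF n. cell_mass n \<omega> t)"
  using assms sets_K unfolding cell_mass_def below_def
  by (subst INF_emeasure_dyadic_cell) (auto simp: less_top)

lemma Ptilde_measurable_graph:
  "S \<in> sets (pred_sigma M F) \<Longrightarrow>
    Ptilde_measurable M F (\<lambda>\<omega> t x. indicator {(\<omega>, t, x). (\<omega>, t) \<in> S \<and> x \<in> {gap \<omega> t}} (\<omega>, t, x))"
  by (rule Ptilde_measurable_indicator) simp_all

lemma int_nu_graph:
  assumes "\<omega> \<in> space M" "S \<in> sets (pred_sigma M F)"
  shows "int_nu \<nu> (\<lambda>\<omega> t x. indicator {(\<omega>, t, x). (\<omega>, t) \<in> S \<and> x \<in> {gap \<omega> t}} (\<omega>, t, x)) {0..} \<omega> =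
    (\<integral>\<^sup>+ t. indicator {t. (\<omega>, t) \<in> S} t * emeasure (K \<omega> t) {gap \<omega> t} \<partial>dA A \<omega>)"
  by (rule int_nu_section[OF assms Ptilde_measurable_graph[OF assms(2)]])

definition atom_level :: "nat \<Rightarrow> ('a \<times> real) set" where
  "atom_level j = {x \<in> atom_set. ennreal (1 / real (Suc j)) \<le> (INF n. cell_mass n (fst x) (snd x)) \<and>
     (INF n. cell_mass n (fst x) (snd x)) \<le> ennreal (real (Suc j))}"

lemma sets_atom_level: "atom_level j \<in> sets (pred_sigma M F)"
proof -
  have "atom_level j = atom_set \<inter> {x \<in> space (pred_sigma M F).
      ennreal (1 / real (Suc j)) \<le> (INF n. cell_mass n (fst x) (snd x)) \<and>
      (INF n. cell_mass n (fst x) (snd x)) \<le> ennreal (real (Suc j))}"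
    using sets.sets_into_space[OF sets_atom_set] by (auto simp: atom_level_def)
  also have "\<dots> \<in> sets (pred_sigma M F)"
    using sets_atom_set by measurable
  finally show ?thesis .
qed

lemma atom_level_bounds:
  fixes j :: nat
  assumes \<omega>: "\<omega> \<in> space M"
  defines "L \<equiv> {t. (\<omega>, t) \<in> atom_level j}"
    and "\<psi> \<equiv> int_nu \<nu> (\<lambda>\<omega> t x. indicator {(\<omega>, t, x). (\<omega>, t) \<in> atom_level j \<and> x \<in> {gap \<omega> t}} (\<omega>, t, x)) {0..} \<omega>"
  shows "ennreal (1 / real (Suc j)) * emeasure (dA A \<omega>) L \<le> \<psi>"
    and "\<psi> \<le> ennreal (real (Suc j)) * emeasure (dA A \<omega>) L"
    and "emeasure (dA A \<omega>) L \<le> (\<integral>\<^sup>+ t. indicator (non_diffuse \<omega>) t \<partial>dA A \<omega>)"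
proof -
  have L: "L \<in> sets (dA A \<omega>)" using sets_pred_sigma_path[OF sets_atom_level \<omega>] by (simp add: L_def)
  have \<psi>: "\<psi> = (\<integral>\<^sup>+ t. indicator L t * emeasure (K \<omega> t) {gap \<omega> t} \<partial>dA A \<omega>)"
    unfolding \<psi>_def L_def by (rule int_nu_graph[OF \<omega> sets_atom_level])
  have atom: "ennreal (1 / real (Suc j)) \<le> emeasure (K \<omega> t) {gap \<omega> t}"
    "emeasure (K \<omega> t) {gap \<omega> t} \<le> ennreal (real (Suc j))" if "t \<in> L" for t
    using that emeasure_K_gap[of \<omega> t] by (auto simp: L_def atom_level_def atom_set_def)
  show "ennreal (1 / real (Suc j)) * emeasure (dA A \<omega>) L \<le> \<psi>"
    unfolding \<psi> nn_integral_cmult_indicator[OF L, symmetric]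
    by (intro nn_integral_mono) (auto simp del: of_nat_Suc simp: indicator_def atom)
  show "\<psi> \<le> ennreal (real (Suc j)) * emeasure (dA A \<omega>) L"
    unfolding \<psi> nn_integral_cmult_indicator[OF L, symmetric]
    by (intro nn_integral_mono) (auto simp del: of_nat_Suc simp: indicator_def atom)
  have "L \<subseteq> non_diffuse \<omega>"
  proof
    fix t assume t: "t \<in> L"
    have "0 < ennreal (1 / real (Suc j))" by simp
    then have "emeasure (K \<omega> t) {gap \<omega> t} \<noteq> 0" using atom(1)[OF t] by auto
    moreover have "0 \<le> t" using t by (auto simp: L_def atom_level_def atom_set_def below_def)
    ultimately show "t \<in> non_diffuse \<omega>" by (auto simp: non_diffuse_def)
  qed
  then have "(\<integral>\<^sup>+ t. indicator L t \<partial>dA A \<omega>) \<le> (\<integral>\<^sup>+ t. indicator (non_diffuse \<omega>) t \<partial>dA A \<omega>)"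
    by (intro nn_integral_mono) (auto split: split_indicator)
  then show "emeasure (dA A \<omega>) L \<le> (\<integral>\<^sup>+ t. indicator (non_diffuse \<omega>) t \<partial>dA A \<omega>)"
    using L by simp
qed

text \<open>Diffuseness only bounds a possibly non-measurable integrand; comparison with the
  measurable \<open>\<nu>\<close>-integral \<open>\<psi>\<close> turns this into an almost sure statement.\<close>
lemma AE_atom_level_null: "AE \<omega> in M. emeasure (dA A \<omega>) {t. (\<omega>, t) \<in> atom_level j} = 0"
proof -
  define \<psi> where "\<psi> \<omega> = int_nu \<nu>
    (\<lambda>\<omega> t x. indicator {(\<omega>, t, x). (\<omega>, t) \<in> atom_level j \<and> x \<in> {gap \<omega> t}} (\<omega>, t, x)) {0..} \<omega>" for \<omega>
  define lo where "lo = ennreal (1 / real (Suc j))"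
  have "lo \<noteq> 0" by (simp add: lo_def)
  have "lo * ennreal (real (Suc j)) = ennreal (1 / real (Suc j) * real (Suc j))"
    unfolding lo_def by (rule ennreal_mult[symmetric]) auto
  then have lo_hi: "lo * ennreal (real (Suc j)) = 1" by simp
  have "lo * \<psi> \<omega> \<le> (\<integral>\<^sup>+ t. indicator (non_diffuse \<omega>) t \<partial>dA A \<omega>)" if "\<omega> \<in> space M" for \<omega>
  proof -
    have "lo * \<psi> \<omega> \<le> lo * (ennreal (real (Suc j)) * emeasure (dA A \<omega>) {t. (\<omega>, t) \<in> atom_level j})"
      unfolding \<psi>_def by (rule mult_left_mono[OF atom_level_bounds(2)[OF that]]) simp
    also have "\<dots> = emeasure (dA A \<omega>) {t. (\<omega>, t) \<in> atom_level j}"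
      by (simp only: mult.assoc[symmetric] lo_hi mult_1)
    also have "\<dots> \<le> (\<integral>\<^sup>+ t. indicator (non_diffuse \<omega>) t \<partial>dA A \<omega>)"
      by (rule atom_level_bounds(3)[OF that])
    finally show ?thesis .
  qed
  then have "(\<integral>\<^sup>+ \<omega>. lo * \<psi> \<omega> \<partial>M) \<le> (\<integral>\<^sup>+ \<omega>. (\<integral>\<^sup>+ t. indicator (non_diffuse \<omega>) t \<partial>dA A \<omega>) \<partial>M)"
    by (rule nn_integral_mono)
  then have "(\<integral>\<^sup>+ \<omega>. lo * \<psi> \<omega> \<partial>M) = 0"
    unfolding nn_integral_non_diffuse by simp
  moreover have "\<psi> \<in> borel_measurable M"
    unfolding \<psi>_def by (rule borel_measurable_int_nu[OF compensator Ptilde_measurable_graph[OF sets_atom_level]])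
  ultimately have "AE \<omega> in M. lo * \<psi> \<omega> = 0" by (simp add: nn_integral_0_iff_AE)
  then show ?thesis using AE_space
  proof eventually_elim
    case (elim \<omega>)
    then show ?case
      using atom_level_bounds(1)[of \<omega> j] \<open>lo \<noteq> 0\<close> by (simp add: \<psi>_def lo_def)
  qed
qed

lemma AE_atom_set_null: "AE \<omega> in M. emeasure (dA A \<omega>) {t. (\<omega>, t) \<in> atom_set} = 0"
proof -
  have "AE \<omega> in M. \<forall>j. emeasure (dA A \<omega>) {t. (\<omega>, t) \<in> atom_level j} = 0"
    using AE_atom_level_null by (simp add: AE_all_countable)
  then show ?thesis using AE_space
  proof eventually_elim
  case (elim \<omega>)
  have "{t. (\<omega>, t) \<in> atom_set} = (\<Union>j. {t. (\<omega>, t) \<in> atom_level j})"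
  proof (intro equalityI subsetI)
    fix t assume "t \<in> {t. (\<omega>, t) \<in> atom_set}"
    then obtain n where "cell_mass n \<omega> t < \<infinity>" "0 < (INF n. cell_mass n \<omega> t)"
      by (auto simp: atom_set_def)
    moreover have "(INF n. cell_mass n \<omega> t) \<le> cell_mass n \<omega> t" by (rule INF_lower) simp
    ultimately obtain j where "ennreal (1 / real (Suc j)) \<le> (INF n. cell_mass n \<omega> t)"
        "(INF n. cell_mass n \<omega> t) \<le> ennreal (real (Suc j))"
      using ennreal_between_inverse_Suc by (metis le_less_trans top.not_eq_extremum infinity_ennreal_def)
    then show "t \<in> (\<Union>j. {t. (\<omega>, t) \<in> atom_level j})"
      using \<open>t \<in> _\<close> by (auto simp: atom_level_def)
  qed (auto simp: atom_level_def)
  then show ?case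
    using elim sets_pred_sigma_path[OF sets_atom_level] by (auto intro: emeasure_UN_eq_0)
  qed
qed

definition infinite_mass_piece :: "nat \<Rightarrow> nat \<Rightarrow> ('a \<times> real) set" where
  "infinite_mass_piece i m = infinite_mass_set \<inter> {x. 1 / 2 ^ i \<le> gap (fst x) (snd x)} \<inter>
     few_big_increments M X (1 / 2 ^ Suc i) m"

lemma sets_infinite_mass_piece: "infinite_mass_piece i m \<in> sets (pred_sigma M F)"
proof -
  have "infinite_mass_piece i m = infinite_mass_set \<inter> {x \<in> space (pred_sigma M F). 1 / 2 ^ i \<le> gap (fst x) (snd x)} \<inter>
      few_big_increments M X (1 / 2 ^ Suc i) m"
    using sets.sets_into_space[OF sets_infinite_mass_set] by (auto simp: infinite_mass_piece_def)
  also have "\<dots> \<in> sets (pred_sigma M F)"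
    using sets_infinite_mass_set sets_few_big_increments by measurable
  finally show ?thesis .
qed

lemma Ptilde_measurable_infinite_mass_piece:
  "Ptilde_measurable M F
    (\<lambda>\<omega> t x. indicator {(\<omega>, t, x). (\<omega>, t) \<in> infinite_mass_piece i m \<and> x \<in> dyadic_cell (Suc i) (gap \<omega> t)} (\<omega>, t, x))"
  by (rule Ptilde_measurable_indicator[OF sets_infinite_mass_piece]) (simp add: mem_dyadic_cell_iff)

lemma int_nu_infinite_mass_piece:
  assumes \<omega>: "\<omega> \<in> space M"
  shows "int_nu \<nu>
      (\<lambda>\<omega> t x. indicator {(\<omega>, t, x). (\<omega>, t) \<in> infinite_mass_piece i m \<and> x \<in> dyadic_cell (Suc i) (gap \<omega> t)} (\<omega>, t, x))
      {0..} \<omega> = \<infinity> * emeasure (dA A \<omega>) {t. (\<omega>, t) \<in> infinite_mass_piece i m}"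
proof -
  let ?L = "{t. (\<omega>, t) \<in> infinite_mass_piece i m}"
  have "?L \<in> sets (dA A \<omega>)"
    using sets_pred_sigma_path[OF sets_infinite_mass_piece \<omega>] by simp
  have "emeasure (K \<omega> t) (dyadic_cell (Suc i) (gap \<omega> t)) = \<infinity>" if "t \<in> ?L" for t
    using that by (simp add: infinite_mass_piece_def infinite_mass_set_def cell_mass_def)
  then have "(\<integral>\<^sup>+ t. indicator ?L t * emeasure (K \<omega> t) (dyadic_cell (Suc i) (gap \<omega> t)) \<partial>dA A \<omega>) =
      (\<integral>\<^sup>+ t. \<infinity> * indicator ?L t \<partial>dA A \<omega>)"
    by (intro nn_integral_cong) (simp split: split_indicator)
  also have "\<dots> = \<infinity> * emeasure (dA A \<omega>) ?L"
    by (rule nn_integral_cmult_indicator[OF \<open>?L \<in> sets (dA A \<omega>)\<close>])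
  finally show ?thesis
    unfolding int_nu_section[OF \<omega> sets_infinite_mass_piece Ptilde_measurable_infinite_mass_piece] .
qed

lemma int_mu_infinite_mass_piece_le:
  assumes \<omega>: "\<omega> \<in> space M"
  shows "int_mu X
      (\<lambda>\<omega> t x. indicator {(\<omega>, t, x). (\<omega>, t) \<in> infinite_mass_piece i m \<and> x \<in> dyadic_cell (Suc i) (gap \<omega> t)} (\<omega>, t, x))
      {0..} \<omega> \<le> of_nat (Suc m)"
proof -
  define c :: real where "c = 1 / 2 ^ Suc i"
  define U where "U = {u. 0 < u \<and> (\<omega>, u) \<in> few_big_increments M X c m \<and> c < \<bar>jump X u \<omega>\<bar>}"
  have big: "c < \<bar>jump X s \<omega>\<bar>" if "(\<omega>, s) \<in> infinite_mass_piece i m" "jump X s \<omega> \<in> dyadic_cell (Suc i) (gap \<omega> s)" for s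
  proof -
    have "\<bar>jump X s \<omega> - gap \<omega> s\<bar> < c" "2 * c \<le> gap \<omega> s"
      using dyadic_cell_close[OF that(2)] that(1) by (auto simp: c_def infinite_mass_piece_def)
    then show ?thesis by (simp add: abs_less_iff abs_if split: if_splits)
  qed
  have "int_mu X
      (\<lambda>\<omega> t x. indicator {(\<omega>, t, x). (\<omega>, t) \<in> infinite_mass_piece i m \<and> x \<in> dyadic_cell (Suc i) (gap \<omega> t)} (\<omega>, t, x))
      {0..} \<omega> \<le> (\<integral>\<^sup>+ s. indicator U s \<partial>count_space UNIV)"
    unfolding int_mu_def using big
    by (intro nn_integral_mono) (auto simp: U_def c_def infinite_mass_piece_def split: split_indicator)
  also have "\<dots> = of_nat (card U)"
    using finite_big_jumps(1)[OF \<omega>] by (simp add: U_def)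
  also have "\<dots> \<le> of_nat (Suc m)"
    using finite_big_jumps(2)[OF \<omega>, of c m] unfolding U_def of_nat_le_iff .
  finally show ?thesis .
qed

text \<open>On an infinite-mass piece, \<open>\<nu>\<close> gives infinite mass to the cells around the gap, while
  the jump measure charges them only at the at most \<open>m + 1\<close> big jumps.\<close>
lemma AE_infinite_mass_piece_null: "AE \<omega> in M. emeasure (dA A \<omega>) {t. (\<omega>, t) \<in> infinite_mass_piece i m} = 0"
proof -
  let ?W = "\<lambda>\<omega> t x. indicator {(\<omega>, t, x). (\<omega>, t) \<in> infinite_mass_piece i m \<and> x \<in> dyadic_cell (Suc i) (gap \<omega> t)} (\<omega>, t, x)"
  have "(\<integral>\<^sup>+ \<omega>. int_nu \<nu> ?W {0..} \<omega> \<partial>M) = (\<integral>\<^sup>+ \<omega>. int_mu X ?W {0..} \<omega> \<partial>M)"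
    by (rule nn_integral_int_mu_eq_int_nu[OF compensator Ptilde_measurable_infinite_mass_piece, symmetric])
  also have "\<dots> \<le> (\<integral>\<^sup>+ \<omega>. of_nat (Suc m) \<partial>M)"
    by (intro nn_integral_mono int_mu_infinite_mass_piece_le)
  also have "\<dots> < \<infinity>"
    using prob_space.emeasure_space_1[OF prob_space_M] by (simp add: ennreal_of_nat_eq_real_of_nat)
  finally have "AE \<omega> in M. int_nu \<nu> ?W {0..} \<omega> \<noteq> \<infinity>"
    by (intro nn_integral_PInf_AE borel_measurable_int_nu[OF compensator Ptilde_measurable_infinite_mass_piece]) auto
  then show ?thesis using AE_space
    by eventually_elim (simp add: int_nu_infinite_mass_piece ennreal_mult_eq_top_iff)
qed

lemma AE_infinite_mass_set_null: "AE \<omega> in M. emeasure (dA A \<omega>) {t. (\<omega>, t) \<in> infinite_mass_set} = 0"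
proof -
  have "AE \<omega> in M. \<forall>i m. emeasure (dA A \<omega>) {t. (\<omega>, t) \<in> infinite_mass_piece i m} = 0"
    using AE_infinite_mass_piece_null by (simp add: AE_all_countable)
  then show ?thesis using AE_space
  proof eventually_elim
    case (elim \<omega>)
    have "{t. (\<omega>, t) \<in> infinite_mass_set} \<subseteq> (\<Union>i. \<Union>m. {t. (\<omega>, t) \<in> infinite_mass_piece i m})"
    proof
      fix t assume t: "t \<in> {t. (\<omega>, t) \<in> infinite_mass_set}"
      then have "0 \<le> t" "0 < gap \<omega> t" by (auto simp: infinite_mass_set_def below_def gap_def)
      obtain i where "1 / 2 ^ i < gap \<omega> t"
        using eventually_happens'[OF sequentially_bot eventually_inverse_two_power_less[OF \<open>0 < gap \<omega> t\<close>]]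
        by blast
      moreover obtain m where "\<forall>n. card (big_increments X (1 / 2 ^ Suc i) n \<omega> t) \<le> m"
        using bounded_card_big_increments[OF elim(2) \<open>0 \<le> t\<close>, of "1 / 2 ^ Suc i"] by auto
      ultimately have "(\<omega>, t) \<in> infinite_mass_piece i m"
        using t elim(2) \<open>0 \<le> t\<close> by (simp add: infinite_mass_piece_def few_big_increments_def)
      then show "t \<in> (\<Union>i. \<Union>m. {t. (\<omega>, t) \<in> infinite_mass_piece i m})" by blast
    qed
    moreover have "emeasure (dA A \<omega>) (\<Union>i. \<Union>m. {t. (\<omega>, t) \<in> infinite_mass_piece i m}) = 0"
      using elim sets_pred_sigma_path[OF sets_infinite_mass_piece] by (auto intro!: emeasure_UN_eq_0)
    moreover have "(\<Union>i. \<Union>m. {t. (\<omega>, t) \<in> infinite_mass_piece i m}) \<in> sets (dA A \<omega>)"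
      using sets_pred_sigma_path[OF sets_infinite_mass_piece elim(2)] by auto
    ultimately show ?case
      by (metis emeasure_eq_0)
  qed
qed

lemma emeasure_K_gap_eq_0:
  assumes "(\<omega>, t) \<in> below" "(\<omega>, t) \<notin> atom_set" "(\<omega>, t) \<notin> infinite_mass_set"
  shows "emeasure (K \<omega> t) {gap \<omega> t} = 0"
proof -
  have "\<exists>n. cell_mass n \<omega> t < \<infinity>"
    using assms(1,3) by (auto simp: infinite_mass_set_def less_top)
  with assms(1,2) show ?thesis
    by (auto simp: emeasure_K_gap atom_set_def)
qed

lemma AE_int_nu_Gamma0_eq_0:
  "AE \<omega> in M. int_nu \<nu> (\<lambda>\<omega> t x. indicator (Gamma0 X b) (\<omega>, t, x)) {0..} \<omega> = 0"
  using AE_atom_set_null AE_infinite_mass_set_null AE_space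
proof eventually_elim
  case (elim \<omega>)
  define N where "N = {t. (\<omega>, t) \<in> atom_set} \<union> {t. (\<omega>, t) \<in> infinite_mass_set}"
  have N: "N \<in> sets (dA A \<omega>)"
    using sets_pred_sigma_path[OF sets_atom_set elim(3)] sets_pred_sigma_path[OF sets_infinite_mass_set elim(3)]
    by (simp add: N_def)
  have "int_nu \<nu> (\<lambda>\<omega> t x. indicator (Gamma0 X b) (\<omega>, t, x)) {0..} \<omega> =
      int_nu \<nu> (\<lambda>\<omega> t x. indicator {(\<omega>, t, x). (\<omega>, t) \<in> below \<and> x \<in> {gap \<omega> t}} (\<omega>, t, x)) {0..} \<omega>"
    unfolding int_nu_def using elim(3)
    by (intro nn_integral_cong) (auto simp: indicator_def Gamma0_def below_def gap_def)
  also have "\<dots> = (\<integral>\<^sup>+ t. indicator {t. (\<omega>, t) \<in> below} t * emeasure (K \<omega> t) {gap \<omega> t} \<partial>dA A \<omega>)"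
    by (rule int_nu_graph[OF elim(3) sets_below])
  also have "\<dots> \<le> (\<integral>\<^sup>+ t. \<infinity> * indicator N t \<partial>dA A \<omega>)"
    by (intro nn_integral_mono) (auto simp: N_def emeasure_K_gap_eq_0 split: split_indicator)
  also have "\<dots> = \<infinity> * emeasure (dA A \<omega>) N"
    by (rule nn_integral_cmult_indicator[OF N])
  also have "emeasure (dA A \<omega>) N = 0"
    using elim N by (simp add: N_def emeasure_Un_null_set sets_pred_sigma_path[OF sets_atom_set elim(3)]
        null_setsI sets_pred_sigma_path[OF sets_infinite_mass_set elim(3)])
  finally show ?case by simp
qed

end

theorem proposition3p5:
  fixes M :: "'a measure" and F :: "real \<Rightarrow> 'a measure"
    and X :: "real \<Rightarrow> 'a \<Rightarrow> real" and b :: "real \<Rightarrow> real"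
    and \<nu> :: "'a \<Rightarrow> (real \<times> real) measure"
  assumes "prob_space M"
    and "usual_conditions M F"
    and "semimartingale M F X"
    and "continuous_on {0..} b"
    and "\<forall>\<omega>\<in>space M. X 0 \<omega> < b 0"
    and "is_compensator M F X \<nu>"
  shows "((AE \<omega> in M. \<forall>t\<ge>0. int_nu \<nu> (\<lambda>\<omega> t x. indicator (Gamma0 X b) (\<omega>, t, x)) {0..t} \<omega> = 0)
            \<longrightarrow> J0 M X b \<in> null_sets M)
       \<and> (\<forall>A K. predictable_disintegration M F \<nu> A K \<longrightarrow> J0 M X b \<in> null_sets M)"
proof -
  interpret boundary_crossing M F X b
    using assms(2-4) usual_conditions_filtration[OF assms(2)]
    by unfold_locales (auto simp: semimartingale_def filtration_def)
  show ?thesis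
  proof (intro conjI impI allI)
    assume "AE \<omega> in M. \<forall>t\<ge>0. int_nu \<nu> (\<lambda>\<omega> t x. indicator (Gamma0 X b) (\<omega>, t, x)) {0..t} \<omega> = 0"
    then have "AE \<omega> in M. int_nu \<nu> (\<lambda>\<omega> t x. indicator (Gamma0 X b) (\<omega>, t, x)) {0..} \<omega> = 0"
      using AE_space by eventually_elim (rule int_nu_Ici_eq_0[OF assms(6) Ptilde_measurable_Gamma0])
    then show "J0 M X b \<in> null_sets M"
      by (rule J0_null_if_AE_int_nu_Gamma0_zero[OF assms(5,6)])
  next
    fix A K assume "predictable_disintegration M F \<nu> A K"
    then interpret diffuse_disintegration M F X b \<nu> A K
      using assms(1,6) boundary_crossing_axioms
      by (intro diffuse_disintegration.intro diffuse_disintegration_axioms.intro)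
    show "J0 M X b \<in> null_sets M"
      by (rule J0_null_if_AE_int_nu_Gamma0_zero[OF assms(5,6) AE_int_nu_Gamma0_eq_0])
  qed
qed

end
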